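(* Let $p,q$ satisfy $p(q-1)>2+\frac{1}{pq}$, $1<q<2$, $2<p<3$, and fix $\mu<1$ with $-\mu-pq+2p\leq p-3-\frac{\mu}{pq}$. Define for $t\geq0$, $r\geq0$ the weights $\omega_1,\omega_2,\omega_3$ by \[ \omega_1=\begin{cases}\langle r\rangle\langle t-r\rangle^{\mu/p+q-2}&(r<t/2),\\ \langle t-r\rangle^{\mu/p}\langle t+r\rangle^{q-1}&(r\geq t/2),\end{cases}\quad \omega_2=\begin{cases}\langle r\rangle^{p-2}\langle t+r\rangle^{3-p+\mu/(pq)}&(r<t/2),\\ \langle t-r\rangle^{\mu/(pq)}\langle t+r\rangle&(r\geq t/2),\end{cases}\quad \omega_3=\langle t-r\rangle^{\mu+pq-2p}, \] and the modified weights \[ \tilde\omega_1=\begin{cases}r\langle t-r\rangle^{\mu/p+q-2}&(r<t/2),\\ \langle t-r\rangle^{\mu/p}\langle t+r\rangle^{q-1}&(r\geq t/2),\end{cases}\qquad \tilde\omega_2=\begin{cases}r^{p-2}\langle t+r\rangle^{3-p+\mu/(pq)}&(r<t/2),\\ \langle t-r\rangle^{\mu/(pq)}\langle t+r\rangle&(r\geq t/2).\end{cases} \] For functions $F(t,r)$ (extended evenly in $r$) define \[ LF(t,r)=\frac{1}{2r}\int_0^t\int_{r-t+s}^{r+t-s}\rho F(s,\rho)\,d\rho\,ds,\qquad K_+F(t,r)=\frac12\int_0^t\Big[(r+t-s)F(s,r+t-s)+(r-t+s)F(s,r-t+s)\Big]ds . \] Let $\varepsilon>0$, $C_1>0$,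 and let $X_\varepsilon$ be the set of pairs $(w,v)$ with $w,v,r\partial_rv\in C([2,\infty)\times\mathbb{R})$ (even in $r$), $\operatorname{supp}(w,v)\subset\{t-r\geq1,\ t\geq2\}$, and $\|\omega_1w\|_{L^\infty_{t,r}}+\|\omega_2v\|_{L^\infty_{t,r}}+\|\omega_3\,r\partial_rv\|_{L^\infty_{t,r}}\leq C_1\varepsilon$. Then there is a constant $C>0$ such that for all $(w,v),(\bar w,\bar v)\in X_\varepsilon$, \[ \|\tilde\omega_2L(|w|^p-|\bar w|^p)\|_{L^\infty_{t,r}}\leq C\|\tilde\omega_1(w,\bar w)\|_{L^\infty_{t,r}}^{p-1}\|\tilde\omega_1(w-\bar w)\|_{L^\infty_{t,r}}, \] \[ \|\tilde\omega_1r^{-1}K_+(|v|^q-|\bar v|^q)\|_{L^\infty_{t,r}}\leq C\|\tilde\omega_2(v,\bar v)\|_{L^\infty_{t,r}}^{q-1}\|\tilde\omega_2(v-\bar v)\|_{L^\infty_{t,r}} . \]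
   Context: $\langle a\rangle:=\sqrt{1+|a|^2}$. $L^\infty_{t,r}$ denotes the supremum norm over $t\geq0$, $r\geq0$; functions vanish for $t<2$. For a pair, $\|\tilde\omega_1(w,\bar w)\|_{L^\infty_{t,r}}$ denotes $\|\tilde\omega_1w\|_{L^\infty_{t,r}}+\|\tilde\omega_1\bar w\|_{L^\infty_{t,r}}$ (equivalently up to constants, the maximum), and similarly for $\tilde\omega_2(v,\bar v)$. *)

theory Defs
  imports "HOL-Analysis.Analysis"
begin

definition jb :: "real \<Rightarrow> real" where
  "jb a = sqrt (1 + a\<^sup>2)"

definition omega1 :: "real \<Rightarrow> real \<Rightarrow> real \<Rightarrow> real \<Rightarrow> real \<Rightarrow> real" where
  "omega1 p q mu t r =
     (if r < t / 2 then jb r * jb (t - r) powr (mu / p + q - 2)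
      else jb (t - r) powr (mu / p) * jb (t + r) powr (q - 1))"

definition omega2 :: "real \<Rightarrow> real \<Rightarrow> real \<Rightarrow> real \<Rightarrow> real \<Rightarrow> real" where
  "omega2 p q mu t r =
     (if r < t / 2 then jb r powr (p - 2) * jb (t + r) powr (3 - p + mu / (p * q))
      else jb (t - r) powr (mu / (p * q)) * jb (t + r))"

definition omega3 :: "real \<Rightarrow> real \<Rightarrow> real \<Rightarrow> real \<Rightarrow> real \<Rightarrow> real" where
  "omega3 p q mu t r = jb (t - r) powr (mu + p * q - 2 * p)"

definition omega1t :: "real \<Rightarrow> real \<Rightarrow> real \<Rightarrow> real \<Rightarrow> real \<Rightarrow> real" where
  "omega1t p q mu t r =
     (if r < t / 2 then r * jb (t - r) powr (mu / p + q - 2)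
      else jb (t - r) powr (mu / p) * jb (t + r) powr (q - 1))"

definition omega2t :: "real \<Rightarrow> real \<Rightarrow> real \<Rightarrow> real \<Rightarrow> real \<Rightarrow> real" where
  "omega2t p q mu t r =
     (if r < t / 2 then r powr (p - 2) * jb (t + r) powr (3 - p + mu / (p * q))
      else jb (t - r) powr (mu / (p * q)) * jb (t + r))"

text \<open>Supremum norm over t \<ge> 0, r \<ge> 0 (real-valued; used only for bounded functions).\<close>
definition Linf :: "(real \<Rightarrow> real \<Rightarrow> real) \<Rightarrow> real" where
  "Linf f = Sup {\<bar>f t r\<bar> | t r. 0 \<le> t \<and> 0 \<le> r}"

text \<open>The operators L and K_+ (F is assumed to be even in its second argument).\<close>
definition Lop :: "(real \<Rightarrow> real \<Rightarrow> real) \<Rightarrow> real \<Rightarrow> real \<Rightarrow> real" where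
  "Lop F t r = 1 / (2 * r) *
     integral {0..t} (\<lambda>s. integral {r - t + s..r + t - s} (\<lambda>\<rho>. \<rho> * F s \<rho>))"

definition Kplus :: "(real \<Rightarrow> real \<Rightarrow> real) \<Rightarrow> real \<Rightarrow> real \<Rightarrow> real" where
  "Kplus F t r = 1 / 2 *
     integral {0..t} (\<lambda>s. (r + t - s) * F s (r + t - s) + (r - t + s) * F s (r - t + s))"

definition Xeps :: "real \<Rightarrow> real \<Rightarrow> real \<Rightarrow> real \<Rightarrow> real
    \<Rightarrow> ((real \<Rightarrow> real \<Rightarrow> real) \<times> (real \<Rightarrow> real \<Rightarrow> real)) set" where
  "Xeps p q mu C1 eps = {(w, v).
     continuous_on ({2..} \<times> UNIV) (\<lambda>(t, r). w t r) \<and>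
     continuous_on ({2..} \<times> UNIV) (\<lambda>(t, r). v t r) \<and>
     (\<forall>t r. t \<ge> 2 \<and> r \<noteq> 0 \<longrightarrow> v t differentiable (at r)) \<and>
     continuous_on ({2..} \<times> UNIV) (\<lambda>(t, r). r * deriv (v t) r) \<and>
     (\<forall>t r. w t (- r) = w t r \<and> v t (- r) = v t r) \<and>
     (\<forall>t r. w t r \<noteq> 0 \<longrightarrow> t - r \<ge> 1 \<and> t \<ge> 2) \<and>
     (\<forall>t r. v t r \<noteq> 0 \<longrightarrow> t - r \<ge> 1 \<and> t \<ge> 2) \<and>
     (\<exists>A B D. (\<forall>t r. 0 \<le> t \<and> 0 \<le> r \<longrightarrow>
                    \<bar>omega1 p q mu t r * w t r\<bar> \<le> A \<and>
                    \<bar>omega2 p q mu t r * v t r\<bar> \<le> B \<and>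
                    \<bar>omega3 p q mu t r * (r * deriv (v t) r)\<bar> \<le> D) \<and>
              A + B + D \<le> C1 * eps)}"

end

(*
  By the mean value theorem, ||a|^p - |b|^p| \<le> p max(|a|, |b|)^(p-1) |a - b|. For pairs in X_eps the
  sources |w|^p - |wb|^p and |v|^q - |vb|^q are therefore bounded by the weighted norms on the
  right-hand side times omega1t^(-p), resp. omega2t^(-q), restricted to the cone s \<ge> 2, |\<rho>| \<le> s - 1
  where all elements of X_eps live. So it suffices to bound omega2t L and omega1t r^(-1) K_+ applied
  to these explicit majorants, uniformly in (t, r).

  For K_+ each of the two characteristic terms is dominated by a sum of powers of s that can be
  integrated in closed form. For L the integrand \<rho> F(s, \<rho>) is odd in \<rho>, so the inner integral
  reduces to [|r - t + s|, min (r + t - s) (s - 1)], where the bound is again integrated in closed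
  form and then dominated by powers of s. In both cases the branches r < t/2 and r \<ge> t/2 of the
  weights are treated separately; the exponent conditions are what keeps the resulting powers of
  t - r and t + r bounded.
*)
theory Submission
  imports Defs
begin

section \<open>Elementary estimates\<close>

lemma jb_pos: "jb x > 0" unfolding jb_def by (simp add: add_pos_nonneg)

lemma jb_ge_abs: "jb x \<ge> \<bar>x\<bar>" unfolding jb_def
  by (metis abs_ge_zero add.commute le_add_same_cancel1 real_sqrt_abs real_sqrt_le_mono zero_le_one)

lemma jb_le_1_plus_abs: "jb x \<le> 1 + \<bar>x\<bar>"
proof -
  have "1 + x\<^sup>2 \<le> (1 + \<bar>x\<bar>)\<^sup>2" by (simp add: power2_eq_square algebra_simps)
  then have "sqrt (1 + x\<^sup>2) \<le> sqrt ((1 + \<bar>x\<bar>)\<^sup>2)" by (rule real_sqrt_le_mono)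
  then show ?thesis unfolding jb_def by simp
qed

lemma jb_le_twice_abs: "\<bar>x\<bar> \<ge> 1 \<Longrightarrow> jb x \<le> 2 * \<bar>x\<bar>" using jb_le_1_plus_abs[of x] by simp

lemma jb_ge_self: "x \<ge> 0 \<Longrightarrow> jb x \<ge> x" using jb_ge_abs[of x] by simp

lemma jb_powr_neg_le: "0 < x \<Longrightarrow> 0 \<le> e \<Longrightarrow> jb x powr (-e) \<le> x powr (-e)"
  by (rule powr_mono2') (auto simp: jb_ge_self)

lemma jb_powr_le_twice: "1 \<le> x \<Longrightarrow> 0 \<le> a \<Longrightarrow> jb x powr a \<le> 2 powr a * x powr a"
proof -
  assume x: "1 \<le> x" and a: "0 \<le> a"
  have "jb x powr a \<le> (2*x) powr a" using jb_le_twice_abs[of x] x a jb_pos[of x] by (intro powr_mono2) auto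
  also have "\<dots> = 2 powr a * x powr a" using x by (simp add: powr_mult)
  finally show ?thesis .
qed

lemma powr_mult_powr_neg_le_1: "0 < (T::real) \<Longrightarrow> T \<le> S \<Longrightarrow> 0 \<le> a \<Longrightarrow> T powr a * S powr (-a) \<le> 1"
proof -
  assume T: "0 < T" "T \<le> S" "0 \<le> a"
  have "S powr (-a) \<le> T powr (-a)" using T by (intro powr_mono2') auto
  then have "T powr a * S powr (-a) \<le> T powr a * T powr (-a)" by (intro mult_left_mono) auto
  also have "\<dots> = 1" using T by (simp add: powr_add[symmetric])
  finally show ?thesis .
qed

lemma powr_le_1_of_nonpos: "1 \<le> (T::real) \<Longrightarrow> x \<le> 0 \<Longrightarrow> T powr x \<le> 1"
  by (metis powr_mono powr_zero_eq_one le_numeral_extra(4) order.trans zero_le_one not_one_le_zero powr_eq_0_iff)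

lemma half_powr_neg: "0 < (s::real) \<Longrightarrow> (s/2) powr (-a) = 2 powr a * s powr (-a)"
  by (simp add: powr_divide powr_minus divide_simps)

lemma powr_neg_le_of_half_le:
  fixes s T a :: real
  assumes "0 < T" "T / 2 \<le> s" "0 \<le> a"
  shows "s powr (-a) \<le> 2 powr a * T powr (-a)"
proof -
  have "s powr (-a) \<le> (T/2) powr (-a)" using assms by (intro powr_mono2') auto
  then show ?thesis using half_powr_neg[of T a] assms by simp
qed

lemma powr_diff_le_mvt:
  fixes x y p :: real
  assumes p: "p \<ge> 1" and y: "0 \<le> y" and xy: "y \<le> x"
  shows "x powr p - y powr p \<le> p * x powr (p-1) * (x - y)"
proof (cases "y < x")
  case True
  have "\<exists>l z. y < z \<and> z < x \<and> ((\<lambda>u. u powr p) has_real_derivative l) (at z) \<and>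
           x powr p - y powr p = (x - y) * l"
    by (rule MVT[OF True]) (use y p in \<open>auto intro!: continuous_intros continuous_on_powr'
         simp: real_differentiable_def intro!: exI has_real_derivative_powr\<close>)
  then obtain l z where z: "y < z" "z < x" and d: "((\<lambda>u. u powr p) has_real_derivative l) (at z)"
    and e: "x powr p - y powr p = (x - y) * l" by blast
  have "l = p * z powr (p-1)"
    using DERIV_unique[OF d has_real_derivative_powr[of z p]] z y by simp
  moreover have "z powr (p-1) \<le> x powr (p-1)"
    using z y p by (intro powr_mono2) auto
  ultimately show ?thesis using e True p
    by (simp add: mult_left_mono mult.commute mult.left_commute)
qed (use xy in simp)

lemma abs_powr_abs_diff_le:
  fixes a b p :: real
  assumes p: "p \<ge> 1"
  shows "\<bar>\<bar>a\<bar> powr p - \<bar>b\<bar> powr p\<bar> \<le> p * (max \<bar>a\<bar> \<bar>b\<bar>) powr (p-1) * \<bar>a - b\<bar>"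
proof -
  have aux: "\<bar>x powr p - y powr p\<bar> \<le> p * (max x y) powr (p-1) * \<bar>x - y\<bar>"
    if "0 \<le> x" "0 \<le> y" for x y
  proof (cases "y \<le> x")
    case True
    moreover have "y powr p \<le> x powr p" using True that p by (intro powr_mono2) auto
    ultimately show ?thesis using powr_diff_le_mvt[OF p \<open>0\<le>y\<close> True] that
      by (simp add: max_def)
  next
    case False
    moreover have "x powr p \<le> y powr p" using False that p by (intro powr_mono2) auto
    ultimately show ?thesis using powr_diff_le_mvt[OF p \<open>0\<le>x\<close>, of y] that
      by (simp add: max_def abs_minus_commute)
  qed
  have "\<bar>\<bar>a\<bar> powr p - \<bar>b\<bar> powr p\<bar> \<le> p * (max \<bar>a\<bar> \<bar>b\<bar>) powr (p-1) * \<bar>\<bar>a\<bar> - \<bar>b\<bar>\<bar>"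
    by (rule aux) auto
  also have "\<dots> \<le> p * (max \<bar>a\<bar> \<bar>b\<bar>) powr (p-1) * \<bar>a - b\<bar>"
    using p by (intro mult_left_mono) auto
  finally show ?thesis .
qed

lemma abs_powr_diff_le_weighted:
  fixes a b p \<omega> A B D :: real
  assumes p: "1 \<le> p" and w: "0 < \<omega>" and ha: "\<omega> * \<bar>a\<bar> \<le> A" and hb: "\<omega> * \<bar>b\<bar> \<le> B"
    and hd: "\<omega> * \<bar>a - b\<bar> \<le> D" and AB: "0 \<le> A" "0 \<le> B"
  shows "\<bar>\<bar>a\<bar> powr p - \<bar>b\<bar> powr p\<bar> \<le> p * (A + B) powr (p-1) * D * \<omega> powr (-p)"
proof -
  have m: "max \<bar>a\<bar> \<bar>b\<bar> \<le> (A + B) / \<omega>"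
    using ha hb w AB by (auto simp: divide_simps mult.commute)
  have d: "\<bar>a - b\<bar> \<le> D / \<omega>" using hd w by (simp add: divide_simps mult.commute)
  have "\<bar>\<bar>a\<bar> powr p - \<bar>b\<bar> powr p\<bar> \<le> p * (max \<bar>a\<bar> \<bar>b\<bar>) powr (p-1) * \<bar>a - b\<bar>"
    by (rule abs_powr_abs_diff_le[OF p])
  also have "\<dots> \<le> p * ((A + B) / \<omega>) powr (p-1) * (D / \<omega>)"
    using m d p by (intro mult_mono powr_mono2) auto
  also have "\<dots> = p * (A + B) powr (p-1) * D * (\<omega> powr (p-1) * \<omega>) powr (-1)"
    using w AB by (simp add: powr_divide powr_minus divide_simps)
  also have "\<omega> powr (p-1) * \<omega> = \<omega> powr p"
    using w by (simp add: powr_add[symmetric] powr_diff)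
  also have "(\<omega> powr p) powr (-1) = \<omega> powr (-p)" using powr_powr[of \<omega> p "-1"] by simp
  finally show ?thesis .
qed

lemma abs_integral_le_has_integral:
  fixes f g :: "real \<Rightarrow> real"
  assumes g: "(g has_integral G) {a..b}" and E: "finite E"
    and le: "\<And>x. x \<in> {a..b} - E \<Longrightarrow> \<bar>f x\<bar> \<le> g x" and G: "0 \<le> G"
  shows "\<bar>integral {a..b} f\<bar> \<le> G"
proof (cases "f integrable_on {a..b}")
  case True
  define g' where "g' x = (if x \<in> E then \<bar>f x\<bar> else g x)" for x
  have g': "(g' has_integral G) {a..b}"
    by (rule has_integral_spike_finite[OF E _ g]) (auto simp: g'_def)
  have "norm (integral {a..b} f) \<le> integral {a..b} g'"
    by (rule integral_norm_bound_integral[OF True]) (use g' le in \<open>auto simp: g'_def\<close>)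
  then show ?thesis using g' by (simp add: integral_unique)
next
  case False
  then show ?thesis using G by (simp add: not_integrable_integral)
qed

lemma has_integral_affine_powr:
  fixes k d g a b :: real
  assumes ab: "a \<le> b" and k: "k \<noteq> 0" and g: "g \<noteq> -1"
    and nn: "\<And>x. x \<in> {a..b} \<Longrightarrow> 0 \<le> k*x+d"
    and pos: "\<And>x. x \<in> {a<..<b} \<Longrightarrow> 0 < k*x+d"
    and gp: "g + 1 > 0 \<or> (\<forall>x\<in>{a..b}. 0 < k*x+d)"
  shows "((\<lambda>x. (k*x+d) powr g) has_integral
           ((k*b+d) powr (g+1) - (k*a+d) powr (g+1)) / (k*(g+1))) {a..b}"
proof -
  define F where "F x = (k*x+d) powr (g+1) / (k*(g+1))" for x
  have "((\<lambda>x. (k*x+d) powr g) has_integral F b - F a) {a..b}"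
  proof (rule fundamental_theorem_of_calculus_interior[OF ab])
    have "continuous_on {a..b} (\<lambda>x. (k*x+d) powr (g+1))"
    proof (rule continuous_on_powr')
      show "\<forall>x\<in>{a..b}. 0 \<le> k * x + d \<and> (k * x + d = 0 \<longrightarrow> 0 < g + 1)"
        using nn gp by force
    qed (auto intro!: continuous_intros)
    moreover have "k*(g+1) \<noteq> 0" using k g by auto
    ultimately show "continuous_on {a..b} F" unfolding F_def
      by (intro continuous_on_divide continuous_on_const) auto
  next
    fix x assume x: "x \<in> {a<..<b}"
    have "((\<lambda>x. (k*x+d) powr (g+1)) has_real_derivative (g+1) * (k*x+d) powr (g+1-1) * k) (at x)"
      using DERIV_powr[of "\<lambda>x. k*x+d" k x "\<lambda>_. g+1" 0] pos[OF x]
      by (auto intro!: derivative_eq_intros)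
    then have "(F has_real_derivative (g+1) * (k*x+d) powr (g+1-1) * k / (k*(g+1))) (at x)"
      unfolding F_def by (rule DERIV_cdivide)
    moreover have "(g+1) * (k*x+d) powr (g+1-1) * k / (k*(g+1)) = (k*x+d) powr g"
    proof -
      have kg: "k*(g+1) \<noteq> 0" using k g by auto
      have "(g+1) * (k*x+d) powr (g+1-1) * k = (k*x+d) powr g * (k*(g+1))" by (simp add: mult_ac)
      then show ?thesis using kg by simp
    qed
    ultimately have "(F has_real_derivative (k*x+d) powr g) (at x)" by simp
    then show "(F has_vector_derivative (k*x+d) powr g) (at x)"
      by (simp add: has_real_derivative_iff_has_vector_derivative)
  qed
  then show ?thesis unfolding F_def by (simp add: diff_divide_distrib)
qed

lemma has_integral_restrict_subinterval:
  fixes f :: "real \<Rightarrow> real"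
  assumes "a \<le> c" "c \<le> d" "d \<le> b" and f: "(f has_integral I) {c..d}"
  shows "((\<lambda>x. if c \<le> x \<and> x \<le> d then f x else 0) has_integral I) {a..b}"
proof -
  let ?g = "\<lambda>x. if c \<le> x \<and> x \<le> d then f x else 0"
  have 1: "(?g has_integral 0) {a..c}"
    by (rule has_integral_spike_finite[of "{c}" _ _ "\<lambda>_. 0"]) (auto intro: has_integral_0)
  have 2: "(?g has_integral I) {c..d}"
    by (rule has_integral_spike_finite[of "{}" _ _ f]) (use f in auto)
  have 3: "(?g has_integral 0) {d..b}"
    by (rule has_integral_spike_finite[of "{d}" _ _ "\<lambda>_. 0"]) (auto intro: has_integral_0)
  have 4: "(?g has_integral 0 + I) {a..d}" by (rule has_integral_combine[OF _ _ 1 2]) (use assms in auto)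
  have "(?g has_integral 0 + I + 0) {a..b}" by (rule has_integral_combine[OF _ _ 4 3]) (use assms in auto)
  then show ?thesis by simp
qed

lemma has_integral_abs_diff_powr:
  fixes T a b g :: real
  assumes "a \<le> T" "T \<le> b" "g > -1"
  shows "((\<lambda>s. \<bar>s - T\<bar> powr g) has_integral ((T-a) powr (g+1) + (b-T) powr (g+1))/(g+1)) {a..b}"
proof -
  have g1: "g \<noteq> -1" using assms by auto
  have A: "((\<lambda>s. (T - s) powr g) has_integral (T-a) powr (g+1)/(g+1)) {a..T}"
  proof -
    have "- g - 1 \<noteq> 0" "g + 1 \<noteq> 0" using g1 by auto
    then have e: "- ((T - a) powr (g + 1) / (- g - 1)) = (T-a) powr (g+1)/(g+1)"
      by (simp add: field_simps)
    show ?thesis using has_integral_affine_powr[of a T "-1" g T] assms g1 by (simp add: e)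
  qed
  have A': "((\<lambda>s. \<bar>s - T\<bar> powr g) has_integral (T-a) powr (g+1)/(g+1)) {a..T}"
    by (rule has_integral_spike_finite[of "{}" _ _ _ , OF _ _ A]) auto
  have B: "((\<lambda>s. (s - T) powr g) has_integral (b-T) powr (g+1)/(g+1)) {T..b}"
    using has_integral_affine_powr[of T b 1 g "-T"] assms g1 by simp
  have B': "((\<lambda>s. \<bar>s - T\<bar> powr g) has_integral (b-T) powr (g+1)/(g+1)) {T..b}"
    by (rule has_integral_spike_finite[of "{}" _ _ _ , OF _ _ B]) auto
  show ?thesis using has_integral_combine[OF assms(1,2) A' B'] by (simp add: add_divide_distrib)
qed

lemma powr_antiderivative_le_left:
  assumes "0 < a" "a \<le> b" "2 < (p::real)"
  shows "(a powr (2-p) - b powr (2-p)) / (p-2) \<le> (b - a) * a powr (1-p)"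
proof -
  have h: "((\<lambda>x. (1*x+0) powr (1-p)) has_integral ((1*b+0) powr (1-p+1) - (1*a+0) powr (1-p+1)) / (1*(1-p+1))) {a..b}"
    by (rule has_integral_affine_powr) (use assms in auto)
  have h2: "((\<lambda>x. a powr (1-p)) has_integral a powr (1-p) * (b - a)) {a..b}"
    using has_integral_const_real[of "a powr (1-p)" a b] assms by (simp add: mult.commute)
  have "((1*b+0) powr (1-p+1) - (1*a+0) powr (1-p+1)) / (1*(1-p+1)) \<le> a powr (1-p) * (b - a)"
    by (rule has_integral_le[OF h h2]) (use assms in \<open>auto intro!: powr_mono2'\<close>)
  moreover have "((1*b+0) powr (1-p+1) - (1*a+0) powr (1-p+1)) / (1*(1-p+1)) = (a powr (2-p) - b powr (2-p)) / (p-2)"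
    using assms by (simp add: field_simps)
  ultimately show ?thesis by (simp add: mult_ac)
qed

lemma powr_antiderivative_le_right:
  assumes "a \<le> b" "0 < s - b" "0 < (mu::real)" "mu < 1"
  shows "((s-a) powr (1-mu) - (s-b) powr (1-mu)) / (1-mu) \<le> (b - a) * (s-b) powr (-mu)"
proof -
  have h: "((\<lambda>x. ((-1)*x+s) powr (-mu)) has_integral (((-1)*b+s) powr (-mu+1) - ((-1)*a+s) powr (-mu+1)) / ((-1)*(-mu+1))) {a..b}"
    by (rule has_integral_affine_powr) (use assms in auto)
  have h2: "((\<lambda>x. (s-b) powr (-mu)) has_integral (s-b) powr (-mu) * (b - a)) {a..b}"
    using has_integral_const_real[of "(s-b) powr (-mu)" a b] assms by (simp add: mult.commute)
  have "(((-1)*b+s) powr (-mu+1) - ((-1)*a+s) powr (-mu+1)) / ((-1)*(-mu+1)) \<le> (s-b) powr (-mu) * (b - a)"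
    by (rule has_integral_le[OF h h2]) (use assms in \<open>auto intro!: powr_mono2'\<close>)
  moreover have "(((-1)*b+s) powr (-mu+1) - ((-1)*a+s) powr (-mu+1)) / ((-1)*(-mu+1)) = ((s-a) powr (1-mu) - (s-b) powr (1-mu)) / (1-mu)"
    using assms by (simp add: field_simps)
  ultimately show ?thesis by (simp add: mult_ac)
qed

lemma integral_odd_eq_0:
  fixes f :: "real \<Rightarrow> real"
  assumes c: "continuous_on {-c..c} f" and odd: "\<And>x. f (-x) = - f x" and c0: "0 \<le> c"
  shows "integral {-c..c} f = 0"
proof -
  have i: "f integrable_on {-c..c}" using c integrable_continuous_real by blast
  have "integral {-c..0} f + integral {0..c} f = integral {-c..c} f"
    by (rule Henstock_Kurzweil_Integration.integral_combine) (use c0 i in auto)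
  moreover have "integral {-c..0} f = integral {0..c} (\<lambda>x. f (-x))"
    using Henstock_Kurzweil_Integration.integral_reflect_real[of c 0 "\<lambda>x. f (-x)"] by simp
  moreover have "integral {0..c} (\<lambda>x. f (-x)) = - integral {0..c} f"
    by (simp add: odd integral_neg)
  ultimately show ?thesis by simp
qed

lemma integral_odd_truncate:
  fixes f :: "real \<Rightarrow> real"
  assumes cont: "continuous_on UNIV f" and odd: "\<And>x. f (-x) = - f x"
    and supp: "\<And>x. x > c \<Longrightarrow> f x = 0"
    and ab: "lo \<le> hi" "\<bar>lo\<bar> \<le> hi"
  shows "integral {lo..hi} f = (if \<bar>lo\<bar> \<le> c then integral {\<bar>lo\<bar>..min hi c} f else 0)"
proof -
  have intg: "f integrable_on {x..y}" for x y
    using cont by (intro integrable_continuous_real) (auto intro: continuous_on_subset)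
  have step1: "integral {lo..hi} f = integral {\<bar>lo\<bar>..hi} f"
  proof (cases "0 \<le> lo")
    case True
    then show ?thesis by simp
  next
    case False
    have "integral {lo..-lo} f + integral {-lo..hi} f = integral {lo..hi} f"
      by (rule Henstock_Kurzweil_Integration.integral_combine) (use False ab intg in auto)
    moreover have "integral {lo..-lo} f = 0"
      using integral_odd_eq_0[of "-lo" f] False cont odd by (auto intro: continuous_on_subset)
    ultimately show ?thesis using False by simp
  qed
  show ?thesis
  proof (cases "\<bar>lo\<bar> \<le> c")
    case False
    have "integral {\<bar>lo\<bar>..hi} f = integral {\<bar>lo\<bar>..hi} (\<lambda>_. 0)"
      by (rule integral_cong) (use False supp in auto)
    then show ?thesis using step1 False by simp
  next
    case True
    define m where "m = min hi c"
    have m: "\<bar>lo\<bar> \<le> m" "m \<le> hi" using True ab unfolding m_def by auto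
    have "integral {\<bar>lo\<bar>..m} f + integral {m..hi} f = integral {\<bar>lo\<bar>..hi} f"
      by (rule Henstock_Kurzweil_Integration.integral_combine) (use m intg in auto)
    moreover have "integral {m..hi} f = integral {m..hi} (\<lambda>_. 0)"
    proof (rule integral_spike[of "{m}"])
      fix x assume x: "x \<in> {m..hi} - {m}"
      show "0 = f x"
      proof (cases "hi \<le> c")
        case True
        then show ?thesis using x unfolding m_def by auto
      next
        case False
        then show ?thesis using x supp unfolding m_def by auto
      qed
    qed auto
    ultimately show ?thesis using step1 True unfolding m_def by simp
  qed
qed

lemma Linf_upper:
  assumes B: "\<forall>t r. 0 \<le> t \<and> 0 \<le> r \<longrightarrow> \<bar>f t r\<bar> \<le> B" and tr: "0 \<le> t" "0 \<le> r"
  shows "\<bar>f t r\<bar> \<le> Linf f"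
  unfolding Linf_def
proof (rule cSup_upper)
  show "\<bar>f t r\<bar> \<in> {\<bar>f t r\<bar> |t r. 0 \<le> t \<and> 0 \<le> r}" using tr by blast
  show "bdd_above {\<bar>f t r\<bar> |t r. 0 \<le> t \<and> 0 \<le> r}" using B by (auto intro!: bdd_aboveI[of _ B])
qed

lemma Linf_nonneg:
  assumes B: "\<forall>t r. 0 \<le> t \<and> 0 \<le> r \<longrightarrow> \<bar>f t r\<bar> \<le> B"
  shows "0 \<le> Linf f"
  using Linf_upper[OF B, of 0 0] by simp

lemma weighted_diff_bounded:
  fixes \<omega> w wb :: "real \<Rightarrow> real \<Rightarrow> real"
  assumes "\<forall>t r. 0 \<le> t \<and> 0 \<le> r \<longrightarrow> \<bar>\<omega> t r * w t r\<bar> \<le> A"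
    and "\<forall>t r. 0 \<le> t \<and> 0 \<le> r \<longrightarrow> \<bar>\<omega> t r * wb t r\<bar> \<le> B"
  shows "\<forall>t r. 0 \<le> t \<and> 0 \<le> r \<longrightarrow> \<bar>\<omega> t r * (w t r - wb t r)\<bar> \<le> A + B"
proof (intro allI impI)
  fix t r :: real assume "0 \<le> t \<and> 0 \<le> r"
  then have "\<bar>\<omega> t r * w t r\<bar> \<le> A" "\<bar>\<omega> t r * wb t r\<bar> \<le> B" using assms by auto
  then have "\<bar>\<omega> t r * w t r\<bar> + \<bar>\<omega> t r * wb t r\<bar> \<le> A + B" by (rule add_mono)
  then show "\<bar>\<omega> t r * (w t r - wb t r)\<bar> \<le> A + B"
    using abs_triangle_ineq4[of "\<omega> t r * w t r" "\<omega> t r * wb t r"] by (simp add: right_diff_distrib)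
qed

section \<open>Exponents and weights\<close>

definition exponent_conditions :: "real \<Rightarrow> real \<Rightarrow> real \<Rightarrow> bool" where
  "exponent_conditions p q mu \<longleftrightarrow> p * (q - 1) > 2 + 1 / (p * q) \<and> 1 < q \<and> q < 2 \<and> 2 < p \<and> p < 3 \<and> mu < 1
     \<and> - mu - p * q + 2 * p \<le> p - 3 - mu / (p * q)"

lemma exponent_conditionsD:
  assumes "exponent_conditions p q mu"
  shows "0 < mu" "1 < q" "q < 2" "2 < p" "p < 3" "mu < 1"
    "3 - p + mu/(p*q) \<le> mu + p*q - 2*p"
    "0 < 3 - p + mu/(p*q)"
    "p*q - p > 2"
    "p + 3 - mu - p*q + mu/(p*q) \<le> 0"
    "0 < p*q"
proof -
  have p: "2 < p" "p < 3" and q: "1 < q" "q < 2" and m: "mu < 1"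
    and h1: "p * (q - 1) > 2 + 1 / (p * q)" and h2: "- mu - p * q + 2 * p \<le> p - 3 - mu / (p * q)"
    using assms unfolding exponent_conditions_def by auto
  have pq: "p*q > 2" using mult_strict_mono[of 2 p 1 q] p q by simp
  show "0 < p*q" using pq by simp
  have "p*(q-1) < p * 1" using p q by (intro mult_strict_left_mono) auto
  then have "p*q - p < p" by (simp add: algebra_simps)
  then have A: "p + 3 - p*q > 0" using p by linarith
  have B: "1/(p*q) < 1" using pq by simp
  have C: "p + 3 - p*q \<le> mu * (1 - 1/(p*q))" using h2 by (simp add: algebra_simps)
  show mu0: "0 < mu"
  proof (rule ccontr)
    assume "\<not> 0 < mu"
    then have "mu * (1 - 1/(p*q)) \<le> 0" using B by (intro mult_nonpos_nonneg) auto
    then show False using A C by linarith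
  qed
  show "1 < q" "q < 2" "2 < p" "p < 3" "mu < 1" using p q m by auto
  show "3 - p + mu/(p*q) \<le> mu + p*q - 2*p" using h2 by linarith
  show "0 < 3 - p + mu/(p*q)" using p mu0 pq by (simp add: add_pos_pos)
  have "1/(p*q) > 0" using pq by simp
  moreover have "p*q - p > 2 + 1/(p*q)" using h1 by (simp add: algebra_simps)
  ultimately show "p*q - p > 2" by linarith
  show "p + 3 - mu - p*q + mu/(p*q) \<le> 0" using h2 by linarith
qed

lemma exponent_conditions_q_mult_p_minus_2_lt_2: "exponent_conditions p q mu \<Longrightarrow> q*(p-2) < 2"
proof -
  assume pr: "exponent_conditions p q mu"
  note f = exponent_conditionsD[OF pr]
  have "q*(p-2) < 2*1" using f by (intro mult_strict_mono) auto
  then show ?thesis by simp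
qed

lemma exponent_conditions_mu_div_p_lt_1: "exponent_conditions p q mu \<Longrightarrow> mu/p < 1"
  using exponent_conditionsD[of p q mu] by (simp add: divide_less_eq)

lemma exponent_conditions_identities:
  assumes pr: "exponent_conditions p q mu"
  shows "2 - q*(p-2) - q*(3-p+mu/(p*q)) = -(mu/p + q - 2)"
    "(mu/p + q - 2) - q*(3-p+mu/(p*q)) + 2 - q*(p-2) = 0"
    "0 < mu/p + q - 2" "0 < mu/p"
proof -
  note f = exponent_conditionsD[OF pr]
  have qq: "q * (mu/(p*q)) = mu/p" using f by (simp add: field_simps)
  show "2 - q*(p-2) - q*(3-p+mu/(p*q)) = -(mu/p + q - 2)" using qq by (simp add: algebra_simps)
  then show "(mu/p + q - 2) - q*(3-p+mu/(p*q)) + 2 - q*(p-2) = 0" by simp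
  have "mu/p + q - 2 = (mu + p*q - 2*p)/p" using f by (simp add: field_simps)
  moreover have "0 < mu + p*q - 2*p" using f by linarith
  ultimately show "0 < mu/p + q - 2" using f by simp
  show "0 < mu/p" using f by simp
qed

lemma omega1t_pos: "0 < r \<Longrightarrow> 0 < omega1t p q mu t r"
  unfolding omega1t_def using jb_pos[THEN less_imp_neq, THEN not_sym] by auto

lemma omega2t_pos: "0 < r \<Longrightarrow> 0 < omega2t p q mu t r"
  unfolding omega2t_def using jb_pos[THEN less_imp_neq, THEN not_sym] jb_pos by auto

lemma omega1t_le_omega1: "0 \<le> r \<Longrightarrow> 0 \<le> omega1t p q mu t r \<and> omega1t p q mu t r \<le> omega1 p q mu t r"
  unfolding omega1t_def omega1_def using jb_ge_self[of r] by (auto intro!: mult_right_mono)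

lemma omega2t_le_omega2: "0 \<le> r \<Longrightarrow> 2 < p \<Longrightarrow> 0 \<le> omega2t p q mu t r \<and> omega2t p q mu t r \<le> omega2 p q mu t r"
  unfolding omega2t_def omega2_def using jb_ge_self[of r] jb_pos[of "t+r"]
  by (auto intro!: mult_right_mono powr_mono2)

(* Suffix _interior refers to the branch r < t/2 of the weights, suffix _cone to r \<ge> t/2. *)
lemma omega1t_powr_neg_interior:
  assumes p: "p > 0" and r: "0 < r" "r < t/2"
  shows "omega1t p q mu t r powr (-p) = r powr (-p) * jb (t-r) powr (-(mu + p*q - 2*p))"
proof -
  have "omega1t p q mu t r powr (-p) = r powr (-p) * (jb (t-r) powr (mu/p+q-2)) powr (-p)"
    unfolding omega1t_def using r by (simp add: powr_mult)
  also have "\<dots> = r powr (-p) * jb (t-r) powr (-(mu + p*q - 2*p))"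
    using p by (simp add: powr_powr algebra_simps)
  finally show ?thesis .
qed

lemma omega1t_powr_neg_cone:
  assumes p: "p > 0" and r: "t/2 \<le> r"
  shows "omega1t p q mu t r powr (-p) = jb (t-r) powr (-mu) * jb (t+r) powr (-(p*(q-1)))"
proof -
  have "omega1t p q mu t r powr (-p) = (jb (t-r) powr (mu/p)) powr (-p) * (jb (t+r) powr (q-1)) powr (-p)"
    unfolding omega1t_def using r jb_pos by (simp add: powr_mult less_imp_le)
  also have "\<dots> = jb (t-r) powr (-mu) * jb (t+r) powr (-(p*(q-1)))"
    using p by (simp add: powr_powr algebra_simps)
  finally show ?thesis .
qed

lemma omega2t_powr_neg_interior:
  assumes q: "q > 0" and r: "0 < r" "r < t/2"
  shows "omega2t p q mu t r powr (-q) = r powr (-(q*(p-2))) * jb (t+r) powr (-(q*(3-p+mu/(p*q))))"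
proof -
  have "omega2t p q mu t r powr (-q) = (r powr (p-2)) powr (-q) * (jb (t+r) powr (3-p+mu/(p*q))) powr (-q)"
    unfolding omega2t_def using r by (simp add: powr_mult)
  also have "\<dots> = r powr (-(q*(p-2))) * jb (t+r) powr (-(q*(3-p+mu/(p*q))))"
    by (simp add: powr_powr mult_ac)
  finally show ?thesis .
qed

lemma omega2t_powr_neg_cone:
  assumes q: "q > 0" and p: "p > 0" and r: "t/2 \<le> r"
  shows "omega2t p q mu t r powr (-q) = jb (t-r) powr (-(mu/p)) * jb (t+r) powr (-q)"
proof -
  have "omega2t p q mu t r powr (-q) = (jb (t-r) powr (mu/(p*q))) powr (-q) * jb (t+r) powr (-q)"
    unfolding omega2t_def using r jb_pos by (simp add: powr_mult less_imp_le)
  also have "\<dots> = jb (t-r) powr (-(mu/p)) * jb (t+r) powr (-q)"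
    using q p by (simp add: powr_powr)
  finally show ?thesis .
qed

(* Elements of X_eps vanish outside s \<ge> 2, \<rho> \<le> s - 1. *)
definition cone_weight :: "(real \<Rightarrow> real \<Rightarrow> real) \<Rightarrow> real \<Rightarrow> real \<Rightarrow> real \<Rightarrow> real" where
  "cone_weight \<omega> p s \<rho> = (if 2 \<le> s \<and> \<rho> \<le> s - 1 then \<omega> s \<rho> powr (-p) else 0)"

lemma integral_slice_before_2:
  assumes Fb: "\<forall>s \<rho>. \<rho> \<noteq> 0 \<longrightarrow> \<bar>F s \<rho>\<bar> \<le> K * cone_weight \<omega> p s \<bar>\<rho>\<bar>" and s: "s < 2"
  shows "integral {a..b} (\<lambda>\<rho>. \<rho> * F s \<rho>) = 0"
proof -
  have "\<rho> * F s \<rho> = 0" for \<rho>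
  proof (cases "\<rho> = 0")
    case False
    have "\<bar>F s \<rho>\<bar> \<le> K * cone_weight \<omega> p s \<bar>\<rho>\<bar>" using spec[OF spec[OF Fb, of s], of \<rho>] False by simp
    moreover have "cone_weight \<omega> p s \<bar>\<rho>\<bar> = 0" unfolding cone_weight_def using s by simp
    ultimately show ?thesis by simp
  qed simp
  then have "(\<lambda>\<rho>. \<rho> * F s \<rho>) = (\<lambda>_. 0)" by auto
  then show ?thesis by simp
qed

section \<open>The estimate for Kplus\<close>

lemma Kplus_forward_term_le:
  assumes pr: "exponent_conditions p q mu" and r: "0 < r" and s: "0 \<le> s" "s \<le> t"
  shows "(t+r-s) * cone_weight (omega2t p q mu) q s (t+r-s) \<le>
     (t+r) powr (-(q*(3-p+mu/(p*q)))) * (t+r-s) powr (1 - q*(p-2))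
     + (if (t+r+1)/2 \<le> s \<and> s \<le> t then (t+r) powr (1-q) * (2* s-(t+r)) powr (-(mu/p)) else 0)"
proof -
  note f = exponent_conditionsD[OF pr]
  define S where "S = t + r"
  define \<rho> where "\<rho> = t + r - s"
  have \<rho>0: "0 < \<rho>" using r s unfolding \<rho>_def by simp
  have S0: "0 < S" using r s unfolding S_def by simp
  have R1: "0 \<le> (t+r) powr (-(q*(3-p+mu/(p*q)))) * (t+r-s) powr (1 - q*(p-2))" by simp
  have R2: "0 \<le> (if (t+r+1)/2 \<le> s \<and> s \<le> t then (t+r) powr (1-q) * (2* s-(t+r)) powr (-(mu/p)) else 0)"
    by simp
  show ?thesis
  proof (cases "2 \<le> s \<and> \<rho> \<le> s - 1")
    case False
    then show ?thesis using R1 R2 unfolding cone_weight_def \<rho>_def by auto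
  next
    case True
    then have s2: "2 \<le> s" and \<rho>s: "\<rho> \<le> s - 1" by auto
    have H: "cone_weight (omega2t p q mu) q s \<rho> = omega2t p q mu s \<rho> powr (-q)" using True unfolding cone_weight_def by simp
    show ?thesis
    proof (cases "\<rho> < s/2")
      case True
      have "omega2t p q mu s \<rho> powr (-q) = \<rho> powr (-(q*(p-2))) * jb S powr (-(q*(3-p+mu/(p*q))))"
        using omega2t_powr_neg_interior[of q \<rho> s p mu] f True \<rho>0 unfolding S_def \<rho>_def by simp
      also have "\<dots> \<le> \<rho> powr (-(q*(p-2))) * S powr (-(q*(3-p+mu/(p*q))))"
        using f S0 by (intro mult_left_mono jb_powr_neg_le) auto
      finally have "\<rho> * cone_weight (omega2t p q mu) q s \<rho> \<le> \<rho> * (\<rho> powr (-(q*(p-2))) * S powr (-(q*(3-p+mu/(p*q)))))"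
        using H \<rho>0 by (intro mult_left_mono) auto
      also have "\<dots> = S powr (-(q*(3-p+mu/(p*q)))) * \<rho> powr (1 - q*(p-2))"
        using powr_mult_base[OF less_imp_le[OF \<rho>0], of "-(q*(p-2))"] by (simp add: mult_ac)
      finally show ?thesis using R2 unfolding S_def \<rho>_def by simp
    next
      case False
      have e1: "s - \<rho> = 2* s - S" "s + \<rho> = S" unfolding S_def \<rho>_def by auto
      have ge1: "1 \<le> 2* s - S" using \<rho>s e1 by linarith
      have "omega2t p q mu s \<rho> powr (-q) = jb (2* s-S) powr (-(mu/p)) * jb S powr (-q)"
        using omega2t_powr_neg_cone[of q p s \<rho> mu] f False e1 by simp
      also have "\<dots> \<le> (2* s-S) powr (-(mu/p)) * S powr (-q)"
        using f S0 ge1 by (intro mult_mono jb_powr_neg_le) auto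
      finally have "\<rho> * cone_weight (omega2t p q mu) q s \<rho> \<le> \<rho> * ((2* s-S) powr (-(mu/p)) * S powr (-q))"
        using H \<rho>0 by (intro mult_left_mono) auto
      also have "\<dots> \<le> S * ((2* s-S) powr (-(mu/p)) * S powr (-q))"
        using r s unfolding S_def \<rho>_def by (intro mult_right_mono) auto
      also have "\<dots> = S powr (1-q) * (2* s-S) powr (-(mu/p))"
        using powr_mult_base[OF less_imp_le[OF S0], of "-q"] by (simp add: mult_ac)
      finally have A: "\<rho> * cone_weight (omega2t p q mu) q s \<rho> \<le> S powr (1-q) * (2* s-S) powr (-(mu/p))" .
      have "(t+r+1)/2 \<le> s" using ge1 unfolding S_def by simp
      then have "(if (t+r+1)/2 \<le> s \<and> s \<le> t then (t+r) powr (1-q) * (2 * s-(t+r)) powr (-(mu/p)) else 0)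
          = S powr (1-q) * (2 * s-S) powr (-(mu/p))" using s unfolding S_def by simp
      then show ?thesis using A R1 unfolding S_def \<rho>_def by linarith
    qed
  qed
qed

lemma Kplus_backward_term_le:
  assumes pr: "exponent_conditions p q mu" and r: "0 < r" and s: "0 \<le> s" "s \<le> t" and T: "1 \<le> t - r"
  shows "\<bar>s - (t-r)\<bar> * cone_weight (omega2t p q mu) q s \<bar>s - (t-r)\<bar> \<le>
     (if 0 \<le> s \<and> s \<le> min (2*(t-r)) t then (2*(t-r)/3) powr (-(q*(3-p+mu/(p*q)))) * \<bar>s-(t-r)\<bar> powr (1 - q*(p-2)) else 0)
   + (if ((t-r)+1)/2 \<le> s \<and> s \<le> t-r then (t-r) powr (1-q) * (2* s-(t-r)) powr (-(mu/p)) else 0)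
   + (if t-r \<le> s \<and> s \<le> t then (t-r) powr (-(mu/p)) * (2* s-(t-r)) powr (1-q) else 0)"
  (is "?L \<le> ?A + ?B + ?C")
proof -
  note f = exponent_conditionsD[OF pr]
  define T where "T = t - r"
  define \<rho> where "\<rho> = \<bar>s - T\<bar>"
  have T1: "1 \<le> T" using T unfolding T_def .
  have nn: "0 \<le> ?A" "0 \<le> ?B" "0 \<le> ?C" by auto
  show ?thesis
  proof (cases "\<rho> > 0 \<and> 2 \<le> s \<and> \<rho> \<le> s - 1")
    case False
    then have "?L = 0" unfolding cone_weight_def \<rho>_def T_def by auto
    then show ?thesis using nn by linarith
  next
    case True
    then have \<rho>0: "0 < \<rho>" and s2: "2 \<le> s" and \<rho>s: "\<rho> \<le> s - 1" by auto
    have H: "cone_weight (omega2t p q mu) q s \<rho> = omega2t p q mu s \<rho> powr (-q)" using True unfolding cone_weight_def by simp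
    show ?thesis
    proof (cases "\<rho> < s/2")
      case True
      have "s - T < s/2" "T - s < s/2" using True unfolding \<rho>_def abs_less_iff by auto
      then have s23: "2*T/3 \<le> s" "s \<le> 2*T" by linarith+
      have sp: "2*T/3 \<le> s + \<rho>" using s23 \<rho>0 by simp
      have "omega2t p q mu s \<rho> powr (-q) = \<rho> powr (-(q*(p-2))) * jb (s+\<rho>) powr (-(q*(3-p+mu/(p*q))))"
        using omega2t_powr_neg_interior[of q \<rho> s p mu] f True \<rho>0 by simp
      also have "\<dots> \<le> \<rho> powr (-(q*(p-2))) * (s+\<rho>) powr (-(q*(3-p+mu/(p*q))))"
        using f \<rho>0 s by (intro mult_left_mono jb_powr_neg_le) auto
      also have "\<dots> \<le> \<rho> powr (-(q*(p-2))) * (2*T/3) powr (-(q*(3-p+mu/(p*q))))"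
        using f T1 sp by (intro mult_left_mono powr_mono2') auto
      finally have "\<rho> * cone_weight (omega2t p q mu) q s \<rho> \<le> \<rho> * (\<rho> powr (-(q*(p-2))) * (2*T/3) powr (-(q*(3-p+mu/(p*q)))))"
        using H \<rho>0 by (intro mult_left_mono) auto
      also have "\<dots> = (2*T/3) powr (-(q*(3-p+mu/(p*q)))) * \<rho> powr (1 - q*(p-2))"
        using powr_mult_base[OF less_imp_le[OF \<rho>0], of "-(q*(p-2))"] by (simp add: mult_ac)
      finally have "?L \<le> ?A" using s23 s unfolding \<rho>_def T_def by simp
      then show ?thesis using nn by linarith
    next
      case False
      then have II: "s/2 \<le> \<rho>" by simp
      have om: "omega2t p q mu s \<rho> powr (-q) = jb (s-\<rho>) powr (-(mu/p)) * jb (s+\<rho>) powr (-q)"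
        using omega2t_powr_neg_cone[of q p s \<rho> mu] f II by simp
      show ?thesis
      proof (cases "s \<le> T")
        case True
        have e1: "\<rho> = T - s" "s - \<rho> = 2* s - T" "s + \<rho> = T" using True unfolding \<rho>_def by auto
        have ge1: "1 \<le> 2* s - T" using \<rho>s e1 by linarith
        have "omega2t p q mu s \<rho> powr (-q) \<le> (2* s-T) powr (-(mu/p)) * T powr (-q)"
          unfolding om e1(2,3) using f T1 ge1 by (intro mult_mono jb_powr_neg_le) auto
        then have "\<rho> * cone_weight (omega2t p q mu) q s \<rho> \<le> \<rho> * ((2* s-T) powr (-(mu/p)) * T powr (-q))"
          using H \<rho>0 by (intro mult_left_mono) auto
        also have "\<dots> \<le> T * ((2* s-T) powr (-(mu/p)) * T powr (-q))"
          using s e1 by (intro mult_right_mono) auto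
        also have "\<dots> = T powr (1-q) * (2* s-T) powr (-(mu/p))"
          using powr_mult_base[of T "-q"] T1 by (simp add: mult_ac)
        finally have "?L \<le> ?B" using ge1 True unfolding \<rho>_def T_def by simp
        then show ?thesis using nn by linarith
      next
        case False
        have e1: "\<rho> = s - T" "s - \<rho> = T" "s + \<rho> = 2* s - T" using False unfolding \<rho>_def by auto
        have ge1: "1 \<le> 2* s - T" using False T1 by linarith
        have "omega2t p q mu s \<rho> powr (-q) \<le> T powr (-(mu/p)) * (2* s-T) powr (-q)"
          unfolding om e1(2,3) using f T1 ge1 by (intro mult_mono jb_powr_neg_le) auto
        then have "\<rho> * cone_weight (omega2t p q mu) q s \<rho> \<le> \<rho> * (T powr (-(mu/p)) * (2* s-T) powr (-q))"
          using H \<rho>0 by (intro mult_left_mono) auto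
        also have "\<dots> \<le> (2* s-T) * (T powr (-(mu/p)) * (2* s-T) powr (-q))"
          using s e1 T1 by (intro mult_right_mono) auto
        also have "\<dots> = T powr (-(mu/p)) * (2* s-T) powr (1-q)"
          using powr_mult_base[of "2* s-T" "-q"] ge1 by (simp add: mult_ac)
        finally have "?L \<le> ?C" using False s unfolding \<rho>_def T_def by simp
        then show ?thesis using nn by linarith
      qed
    qed
  qed
qed

(* The first two terms bound the characteristic \<rho> = t + r - s, the last three \<rho> = |s - (t - r)|. *)
definition Kplus_majorant :: "real \<Rightarrow> real \<Rightarrow> real \<Rightarrow> real \<Rightarrow> real \<Rightarrow> real \<Rightarrow> real" where
  "Kplus_majorant p q mu t r s =
     (t+r) powr (-(q*(3-p+mu/(p*q)))) * (t+r-s) powr (1 - q*(p-2))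
   + (if (t+r+1)/2 \<le> s \<and> s \<le> t then (t+r) powr (1-q) * (2 * s-(t+r)) powr (-(mu/p)) else 0)
   + ((if 0 \<le> s \<and> s \<le> min (2*(t-r)) t
         then (2*(t-r)/3) powr (-(q*(3-p+mu/(p*q)))) * \<bar>s-(t-r)\<bar> powr (1 - q*(p-2)) else 0)
     + (if ((t-r)+1)/2 \<le> s \<and> s \<le> t-r then (t-r) powr (1-q) * (2 * s-(t-r)) powr (-(mu/p)) else 0)
     + (if t-r \<le> s \<and> s \<le> t then (t-r) powr (-(mu/p)) * (2 * s-(t-r)) powr (1-q) else 0))"

lemma Kplus_majorant_nonneg: "0 \<le> Kplus_majorant p q mu t r s"
  unfolding Kplus_majorant_def by (intro add_nonneg_nonneg) auto

lemma Kplus_terms_le_majorant: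
  assumes pr: "exponent_conditions p q mu" and r: "0 < r" and s: "0 \<le> s" "s \<le> t" and T: "1 \<le> t - r"
  shows "(t+r-s) * cone_weight (omega2t p q mu) q s (t+r-s)
      + \<bar>s - (t-r)\<bar> * cone_weight (omega2t p q mu) q s \<bar>s - (t-r)\<bar> \<le> Kplus_majorant p q mu t r s"
  using Kplus_forward_term_le[OF pr r s] Kplus_backward_term_le[OF pr r s T]
  unfolding Kplus_majorant_def by linarith

definition Kplus_envelope :: "real \<Rightarrow> real \<Rightarrow> real \<Rightarrow> real \<Rightarrow> real \<Rightarrow> real" where
  "Kplus_envelope p q mu t r =
     (t+r) powr (-(q*(3-p+mu/(p*q)))) * (t+r) powr (2 - q*(p-2)) / (2 - q*(p-2))
   + (t+r) powr (1-q) * (t-r) powr (1-mu/p) / (2*(1-mu/p))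
   + (2*(t-r)/3) powr (-(q*(3-p+mu/(p*q)))) * (2 * (t-r) powr (2 - q*(p-2)) / (2 - q*(p-2)))
   + (t-r) powr (1-q) * (t-r) powr (1-mu/p) / (2*(1-mu/p))
   + (t-r) powr (-(mu/p)) * (t+r) powr (2-q) / (2*(2-q))"

lemma Kplus_majorant_integral:
  assumes pr: "exponent_conditions p q mu" and r: "0 < r" and T: "1 \<le> t - r"
  shows "\<exists>V. (Kplus_majorant p q mu t r has_integral V) {0..t} \<and> V \<le> Kplus_envelope p q mu t r"
proof -
  note f = exponent_conditionsD[OF pr]
  have c2: "q*(p-2) < 2" by (rule exponent_conditions_q_mult_p_minus_2_lt_2[OF pr])
  have e1: "mu/p < 1" by (rule exponent_conditions_mu_div_p_lt_1[OF pr])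
  have ep: "0 < mu/p" using f by simp
  define S where "S = t + r"
  define T where "T = t - r"
  define qb where "qb = q*(3-p+mu/(p*q))"
  define c where "c = q*(p-2)"
  define e where "e = mu/p"
  have T1: "1 \<le> T" using T unfolding T_def .
  have t0: "0 \<le> t" "T \<le> t" "t \<le> S" "0 < S" using T1 r unfolding T_def S_def by auto
  have c2': "c < 2" "0 < 2 - c" using c2 unfolding c_def by auto
  have e1': "e < 1" "0 < e" using e1 ep unfolding e_def by auto
  have I1a: "((\<lambda>s. ((-1) * s + S) powr (1-c)) has_integral
      (((-1) * t + S) powr (1-c+1) - ((-1)*0 + S) powr (1-c+1)) / ((-1) * (1-c+1))) {0..t}"
    by (rule has_integral_affine_powr) (use t0 c2' r in \<open>auto simp: S_def\<close>)
  have I1: "((\<lambda>s. S powr (-qb) * (S - s) powr (1-c)) has_integral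
      S powr (-qb) * ((S powr (2-c) - r powr (2-c)) / (2-c))) {0..t}"
  proof -
    have eq: "(((-1) * t + S) powr (1-c+1) - ((-1)*0 + S) powr (1-c+1)) / ((-1) * (1-c+1))
        = (S powr (2-c) - r powr (2-c)) / (2-c)"
      using c2' by (simp add: S_def field_simps)
    show ?thesis using has_integral_mult_right[OF I1a, of "S powr (-qb)"] unfolding eq by simp
  qed
  have V1: "S powr (-qb) * ((S powr (2-c) - r powr (2-c)) / (2-c)) \<le> S powr (-qb) * S powr (2-c) / (2-c)"
    using c2' by (simp add: divide_right_mono mult_left_mono)
  have I2a: "((\<lambda>s. (2 * s + (-S)) powr (-e)) has_integral
      ((2 * t + (-S)) powr (-e+1) - (2 * ((S+1)/2) + (-S)) powr (-e+1)) / (2 * (-e+1))) {(S+1)/2..t}"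
    by (rule has_integral_affine_powr) (use t0 e1' T1 in \<open>auto simp: S_def T_def\<close>)
  have I2: "((\<lambda>s. if (S+1)/2 \<le> s \<and> s \<le> t then S powr (1-q) * (2 * s - S) powr (-e) else 0) has_integral
      S powr (1-q) * ((T powr (1-e) - 1) / (2*(1-e)))) {0..t}"
  proof -
    have eq: "((2 * t + (-S)) powr (-e+1) - (2 * ((S+1)/2) + (-S)) powr (-e+1)) / (2 * (-e+1))
       = (T powr (1-e) - 1) / (2*(1-e))"
    proof -
      have h: "2 * ((S+1)/2) + (-S) = 1" "2 * t + (-S) = T" by (simp_all add: S_def T_def field_simps)
      show ?thesis unfolding h by (simp add: algebra_simps)
    qed
    have "((\<lambda>s. S powr (1-q) * (2 * s - S) powr (-e)) has_integral
      S powr (1-q) * ((T powr (1-e) - 1) / (2*(1-e)))) {(S+1)/2..t}"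
      using has_integral_mult_right[OF I2a, of "S powr (1-q)"] unfolding eq by simp
    note W = this
    show ?thesis by (rule has_integral_restrict_subinterval[OF _ _ _ W]) (use t0 T1 in \<open>auto simp: S_def T_def\<close>)
  qed
  have V2: "S powr (1-q) * ((T powr (1-e) - 1) / (2*(1-e))) \<le> S powr (1-q) * T powr (1-e) / (2*(1-e))"
    using e1' by (simp add: divide_right_mono mult_left_mono)
  define b where "b = min (2*T) t"
  have I3a: "((\<lambda>s. \<bar>s - T\<bar> powr (1-c)) has_integral ((T-0) powr (1-c+1) + (b-T) powr (1-c+1))/(1-c+1)) {0..b}"
    by (rule has_integral_abs_diff_powr) (use t0 T1 c2' in \<open>auto simp: b_def\<close>)
  have I3: "((\<lambda>s. if 0 \<le> s \<and> s \<le> b then (2*T/3) powr (-qb) * \<bar>s - T\<bar> powr (1-c) else 0) has_integral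
      (2*T/3) powr (-qb) * ((T powr (2-c) + (b-T) powr (2-c))/(2-c))) {0..t}"
    by (rule has_integral_restrict_subinterval) (use has_integral_mult_right[OF I3a, of "(2*T/3) powr (-qb)"] t0 T1 in \<open>auto simp: b_def\<close>)
  have V3: "(2*T/3) powr (-qb) * ((T powr (2-c) + (b-T) powr (2-c))/(2-c)) \<le> (2*T/3) powr (-qb) * (2 * T powr (2-c) / (2-c))"
  proof -
    have "(b-T) powr (2-c) \<le> T powr (2-c)" using t0 T1 c2' by (intro powr_mono2) (auto simp: b_def)
    then show ?thesis using c2' by (intro mult_left_mono divide_right_mono) auto
  qed
  have I4a: "((\<lambda>s. (2 * s + (-T)) powr (-e)) has_integral
      ((2 * T + (-T)) powr (-e+1) - (2 * ((T+1)/2) + (-T)) powr (-e+1)) / (2 * (-e+1))) {(T+1)/2..T}"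
    by (rule has_integral_affine_powr) (use t0 e1' T1 in auto)
  have I4: "((\<lambda>s. if (T+1)/2 \<le> s \<and> s \<le> T then T powr (1-q) * (2 * s - T) powr (-e) else 0) has_integral
      T powr (1-q) * ((T powr (1-e) - 1) / (2*(1-e)))) {0..t}"
  proof -
    have eq: "((2 * T + (-T)) powr (-e+1) - (2 * ((T+1)/2) + (-T)) powr (-e+1)) / (2 * (-e+1))
       = (T powr (1-e) - 1) / (2*(1-e))"
    proof -
      have h: "2 * ((T+1)/2) + (-T) = 1" "2 * T + (-T) = T" by (simp_all add: field_simps)
      show ?thesis unfolding h by (simp add: algebra_simps)
    qed
    have "((\<lambda>s. T powr (1-q) * (2 * s - T) powr (-e)) has_integral
      T powr (1-q) * ((T powr (1-e) - 1) / (2*(1-e)))) {(T+1)/2..T}"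
      using has_integral_mult_right[OF I4a, of "T powr (1-q)"] unfolding eq by simp
    note W = this
    show ?thesis by (rule has_integral_restrict_subinterval[OF _ _ _ W]) (use t0 T1 in auto)
  qed
  have V4: "T powr (1-q) * ((T powr (1-e) - 1) / (2*(1-e))) \<le> T powr (1-q) * T powr (1-e) / (2*(1-e))"
    using e1' by (simp add: divide_right_mono mult_left_mono)
  have I5a: "((\<lambda>s. (2 * s + (-T)) powr (1-q)) has_integral
      ((2 * t + (-T)) powr (1-q+1) - (2 * T + (-T)) powr (1-q+1)) / (2 * (1-q+1))) {T..t}"
    by (rule has_integral_affine_powr) (use t0 f T1 in auto)
  have I5: "((\<lambda>s. if T \<le> s \<and> s \<le> t then T powr (-e) * (2 * s - T) powr (1-q) else 0) has_integral
      T powr (-e) * ((S powr (2-q) - T powr (2-q)) / (2*(2-q)))) {0..t}"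
  proof -
    have eq: "((2 * t + (-T)) powr (1-q+1) - (2 * T + (-T)) powr (1-q+1)) / (2 * (1-q+1))
       = (S powr (2-q) - T powr (2-q)) / (2*(2-q))"
    proof -
      have h: "2 * t + (-T) = S" "2 * T + (-T) = T" by (simp_all add: S_def T_def)
      show ?thesis unfolding h by (simp add: algebra_simps)
    qed
    have "((\<lambda>s. T powr (-e) * (2 * s - T) powr (1-q)) has_integral
      T powr (-e) * ((S powr (2-q) - T powr (2-q)) / (2*(2-q)))) {T..t}"
      using has_integral_mult_right[OF I5a, of "T powr (-e)"] unfolding eq by simp
    note W = this
    show ?thesis by (rule has_integral_restrict_subinterval[OF _ _ _ W]) (use t0 T1 in auto)
  qed
  have V5: "T powr (-e) * ((S powr (2-q) - T powr (2-q)) / (2*(2-q))) \<le> T powr (-e) * S powr (2-q) / (2*(2-q))"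
    using f by (simp add: divide_right_mono mult_left_mono)
  have all: "((\<lambda>s. S powr (-qb) * (S - s) powr (1-c)
     + (if (S+1)/2 \<le> s \<and> s \<le> t then S powr (1-q) * (2 * s - S) powr (-e) else 0)
     + ((if 0 \<le> s \<and> s \<le> b then (2*T/3) powr (-qb) * \<bar>s - T\<bar> powr (1-c) else 0)
      + (if (T+1)/2 \<le> s \<and> s \<le> T then T powr (1-q) * (2 * s - T) powr (-e) else 0)
      + (if T \<le> s \<and> s \<le> t then T powr (-e) * (2 * s - T) powr (1-q) else 0)))
     has_integral (S powr (-qb) * ((S powr (2-c) - r powr (2-c)) / (2-c))
       + S powr (1-q) * ((T powr (1-e) - 1) / (2*(1-e)))
       + ((2*T/3) powr (-qb) * ((T powr (2-c) + (b-T) powr (2-c))/(2-c))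
         + T powr (1-q) * ((T powr (1-e) - 1) / (2*(1-e)))
         + T powr (-e) * ((S powr (2-q) - T powr (2-q)) / (2*(2-q)))))) {0..t}"
    by (intro has_integral_add I1 I2 I3 I4 I5)
  have Vle: "S powr (-qb) * ((S powr (2-c) - r powr (2-c)) / (2-c))
       + S powr (1-q) * ((T powr (1-e) - 1) / (2*(1-e)))
       + ((2*T/3) powr (-qb) * ((T powr (2-c) + (b-T) powr (2-c))/(2-c))
         + T powr (1-q) * ((T powr (1-e) - 1) / (2*(1-e)))
         + T powr (-e) * ((S powr (2-q) - T powr (2-q)) / (2*(2-q)))) \<le> Kplus_envelope p q mu t r"
    unfolding Kplus_envelope_def using V1 V2 V3 V4 V5 unfolding S_def T_def qb_def c_def e_def by linarith
  show ?thesis using all Vle unfolding Kplus_majorant_def[abs_def] S_def T_def qb_def c_def e_def b_def by blast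
qed

lemma abs_Kplus_le:
  assumes pr: "exponent_conditions p q mu" and K: "0 \<le> K"
    and bound: "\<And>s \<rho>. \<rho> \<noteq> 0 \<Longrightarrow> \<bar>F s \<rho>\<bar> \<le> K * cone_weight (omega2t p q mu) q s \<bar>\<rho>\<bar>"
    and r: "0 < r" and T: "1 \<le> t - r"
  shows "\<bar>Kplus F t r\<bar> \<le> K * Kplus_envelope p q mu t r / 2"
proof -
  obtain V where V: "(Kplus_majorant p q mu t r has_integral V) {0..t}" "V \<le> Kplus_envelope p q mu t r"
    using Kplus_majorant_integral[OF pr r T] by blast
  have weighted: "\<bar>\<rho> * F s \<rho>\<bar> \<le> K * (\<bar>\<rho>\<bar> * cone_weight (omega2t p q mu) q s \<bar>\<rho>\<bar>)" for s \<rho>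
  proof (cases "\<rho> = 0")
    case False
    then show ?thesis using bound[of \<rho> s] K by (simp add: abs_mult mult_left_mono mult.left_commute)
  qed simp
  have "\<bar>(r + t - s) * F s (r + t - s) + (r - t + s) * F s (r - t + s)\<bar> \<le> K * Kplus_majorant p q mu t r s"
    if s: "s \<in> {0..t} - {}" for s
  proof -
    have forward: "\<bar>(r + t - s) * F s (r + t - s)\<bar> \<le> K * ((t+r-s) * cone_weight (omega2t p q mu) q s (t+r-s))"
      using weighted[where s = s and \<rho> = "r + t - s"] s r by (simp add: add.commute)
    have backward: "\<bar>(r - t + s) * F s (r - t + s)\<bar>
        \<le> K * (\<bar>s - (t-r)\<bar> * cone_weight (omega2t p q mu) q s \<bar>s - (t-r)\<bar>)"
      using weighted[where s = s and \<rho> = "r - t + s"] by (simp add: algebra_simps)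
    have "\<bar>(r + t - s) * F s (r + t - s) + (r - t + s) * F s (r - t + s)\<bar>
       \<le> K * ((t+r-s) * cone_weight (omega2t p q mu) q s (t+r-s))
         + K * (\<bar>s - (t-r)\<bar> * cone_weight (omega2t p q mu) q s \<bar>s - (t-r)\<bar>)"
      using abs_triangle_ineq[of "(r + t - s) * F s (r + t - s)" "(r - t + s) * F s (r - t + s)"] forward backward
      by linarith
    also have "\<dots> \<le> K * Kplus_majorant p q mu t r s"
      using mult_left_mono[OF Kplus_terms_le_majorant[OF pr r _ _ T] K] s
      by (simp add: distrib_left)
    finally show ?thesis .
  qed
  moreover have "0 \<le> V" using has_integral_nonneg[OF V(1)] Kplus_majorant_nonneg by auto
  ultimately have "\<bar>integral {0..t} (\<lambda>s. (r + t - s) * F s (r + t - s) + (r - t + s) * F s (r - t + s))\<bar> \<le> K * V"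
    by (intro abs_integral_le_has_integral[OF has_integral_mult_right[OF V(1)], of "{}"]) (use K in auto)
  then have "\<bar>Kplus F t r\<bar> \<le> K * V / 2" unfolding Kplus_def by simp
  also have "\<dots> \<le> K * Kplus_envelope p q mu t r / 2" using V(2) K by (intro divide_right_mono mult_left_mono) auto
  finally show ?thesis .
qed

lemma Kplus_envelope_weight_interior:
  fixes T S W e q c qb k :: real
  assumes T: "1 \<le> T" "T \<le> S" "S \<le> 3*T"
    and ex: "k = e + q - 2" "2 - c - qb = -k" "k - qb + 2 - c = 0"
    and par: "0 < e" "e < 1" "1 < q" "q < 2" "c < 2" "0 < k"
    and W: "0 \<le> W" "W \<le> 2 powr k * T powr k"
  shows "W * (S powr (-qb) * S powr (2-c) / (2-c) + S powr (1-q) * T powr (1-e) / (2*(1-e))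
     + (2*T/3) powr (-qb) * (2 * T powr (2-c) / (2-c)) + T powr (1-q) * T powr (1-e) / (2*(1-e))
     + T powr (-e) * S powr (2-q) / (2*(2-q)))
   \<le> 2 powr k * (1/(2-c) + 1/(2*(1-e)) + (2/3) powr (-qb) * 2 / (2-c) + 1/(2*(1-e)) + 3 powr (2-q)/(2*(2-q)))"
proof -
  have T0: "0 < T" "0 < S" using T by auto
  define J1 where "J1 = S powr (-qb) * S powr (2-c) / (2-c)"
  define J2 where "J2 = S powr (1-q) * T powr (1-e) / (2*(1-e))"
  define J3 where "J3 = (2*T/3) powr (-qb) * (2 * T powr (2-c) / (2-c))"
  define J4 where "J4 = T powr (1-q) * T powr (1-e) / (2*(1-e))"
  define J5 where "J5 = T powr (-e) * S powr (2-q) / (2*(2-q))"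
  have Enn: "0 \<le> J1 + J2 + J3 + J4 + J5" unfolding J1_def J2_def J3_def J4_def J5_def
    using par by (intro add_nonneg_nonneg) auto
  have b1: "T powr k * J1 \<le> 1/(2-c)"
  proof -
    have "S powr (-qb) * S powr (2-c) = S powr (-qb + (2-c))" using T0 by (simp add: powr_add[symmetric])
    also have "-qb + (2-c) = -k" using ex by simp
    finally have "T powr k * J1 = (T powr k * S powr (-k)) / (2-c)"
      unfolding J1_def by simp
    also have "\<dots> \<le> 1/(2-c)" using powr_mult_powr_neg_le_1[of T S k] T0 T par by (intro divide_right_mono) auto
    finally show ?thesis .
  qed
  have b2: "T powr k * J2 \<le> 1/(2*(1-e))"
  proof -
    have "S powr (1-q) \<le> T powr (1-q)" using T0 T par by (intro powr_mono2') auto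
    then have "T powr k * J2 \<le> T powr k * (T powr (1-q) * T powr (1-e) / (2*(1-e)))"
      unfolding J2_def using par by (intro mult_left_mono divide_right_mono mult_right_mono) auto
    also have "\<dots> = T powr (k + (1-q) + (1-e)) / (2*(1-e))" using T0 by (simp add: powr_add[symmetric] add_ac mult.assoc[symmetric])
    also have "k + (1-q) + (1-e) = 0" using ex by simp
    finally show ?thesis using T0 by simp
  qed
  have b3: "T powr k * J3 \<le> (2/3) powr (-qb) * 2 / (2-c)"
  proof -
    have "(2*T/3) powr (-qb) = (2/3) powr (-qb) * T powr (-qb)" using T0
      by (simp add: powr_mult[symmetric])
    then have "T powr k * J3 = (2/3) powr (-qb) * 2 * (T powr k * T powr (-qb) * T powr (2-c)) / (2-c)"
      unfolding J3_def by (simp add: mult_ac)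
    also have "T powr k * T powr (-qb) * T powr (2-c) = T powr (k - qb + (2 - c))" using T0 by (simp add: powr_add[symmetric])
    also have "k - qb + (2-c) = 0" using ex by simp
    finally show ?thesis using T0 by simp
  qed
  have b4: "T powr k * J4 \<le> 1/(2*(1-e))"
  proof -
    have "T powr k * J4 = T powr (k + (1-q) + (1-e)) / (2*(1-e))" unfolding J4_def using T0 by (simp add: powr_add[symmetric] add_ac mult.assoc[symmetric])
    also have "k + (1-q) + (1-e) = 0" using ex by simp
    finally show ?thesis using T0 by simp
  qed
  have b5: "T powr k * J5 \<le> 3 powr (2-q)/(2*(2-q))"
  proof -
    have m: "T powr (-(2-q)) * S powr (2-q) \<le> 3 powr (2-q)"
    proof -
      have "S powr (2-q) \<le> (3*T) powr (2-q)" using T0 T par by (intro powr_mono2) auto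
      then have "T powr (-(2-q)) * S powr (2-q) \<le> T powr (-(2-q)) * (3*T) powr (2-q)" by (intro mult_left_mono) auto
      also have "\<dots> = 3 powr (2-q) * (T powr (-(2-q)) * T powr (2-q))" using T0 by (simp add: powr_mult mult_ac)
      also have "T powr (-(2-q)) * T powr (2-q) = 1" using T0 by (simp add: powr_add[symmetric])
      finally show ?thesis by simp
    qed
    have "T powr k * J5 = T powr (k - e) * S powr (2-q) / (2*(2-q))" unfolding J5_def using T0 by (simp add: powr_add[symmetric] mult.assoc[symmetric])
    also have "k - e = -(2-q)" using ex by simp
    finally have eq: "T powr k * J5 = T powr (-(2-q)) * S powr (2-q) / (2*(2-q))" .
    show ?thesis unfolding eq using m par by (intro divide_right_mono) auto
  qed
  have "W * (J1 + J2 + J3 + J4 + J5) \<le> 2 powr k * T powr k * (J1 + J2 + J3 + J4 + J5)"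
    using W Enn by (intro mult_right_mono) auto
  also have "\<dots> = 2 powr k * (T powr k * J1 + T powr k * J2 + T powr k * J3 + T powr k * J4 + T powr k * J5)"
    by (simp add: algebra_simps)
  also have "\<dots> \<le> 2 powr k * (1/(2-c) + 1/(2*(1-e)) + (2/3) powr (-qb) * 2 / (2-c) + 1/(2*(1-e)) + 3 powr (2-q)/(2*(2-q)))"
    using b1 b2 b3 b4 b5 by (intro mult_left_mono) auto
  finally show ?thesis unfolding J1_def J2_def J3_def J4_def J5_def .
qed

lemma Kplus_envelope_weight_cone:
  fixes T S W e q c qb k L :: real
  assumes T: "1 \<le> T" "T \<le> S"
    and ex: "k = e + q - 2" "2 - c - qb = -k" "k - qb + 2 - c = 0"
    and par: "0 < e" "e < 1" "1 < q" "q < 2" "c < 2" "0 < k" "0 \<le> L"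
    and W: "0 \<le> W" "W \<le> L * (T powr e * S powr (q-2))"
  shows "W * (S powr (-qb) * S powr (2-c) / (2-c) + S powr (1-q) * T powr (1-e) / (2*(1-e))
     + (2*T/3) powr (-qb) * (2 * T powr (2-c) / (2-c)) + T powr (1-q) * T powr (1-e) / (2*(1-e))
     + T powr (-e) * S powr (2-q) / (2*(2-q)))
   \<le> L * (1/(2-c) + 1/(2*(1-e)) + (2/3) powr (-qb) * 2 / (2-c) + 1/(2*(1-e)) + 1/(2*(2-q)))"
proof -
  have T0: "0 < T" "0 < S" using T by auto
  define M where "M = T powr e * S powr (q-2)"
  define J1 where "J1 = S powr (-qb) * S powr (2-c) / (2-c)"
  define J2 where "J2 = S powr (1-q) * T powr (1-e) / (2*(1-e))"
  define J3 where "J3 = (2*T/3) powr (-qb) * (2 * T powr (2-c) / (2-c))"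
  define J4 where "J4 = T powr (1-q) * T powr (1-e) / (2*(1-e))"
  define J5 where "J5 = T powr (-e) * S powr (2-q) / (2*(2-q))"
  have Enn: "0 \<le> J1 + J2 + J3 + J4 + J5" unfolding J1_def J2_def J3_def J4_def J5_def
    using par by (intro add_nonneg_nonneg) auto
  have b1: "M * J1 \<le> 1/(2-c)"
  proof -
    have "M * J1 = T powr e * (S powr (q-2) * S powr (-qb) * S powr (2-c)) / (2-c)"
      unfolding M_def J1_def by (simp add: mult_ac)
    also have "S powr (q-2) * S powr (-qb) * S powr (2-c) = S powr (q-2 + -qb + (2-c))" using T0 by (simp add: powr_add[symmetric])
    also have "q-2 + -qb + (2-c) = -e" using ex by simp
    also have "T powr e * S powr (-e) / (2-c) \<le> 1/(2-c)"
      using powr_mult_powr_neg_le_1[of T S e] T0 T par by (intro divide_right_mono) auto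
    finally show ?thesis .
  qed
  have b2: "M * J2 \<le> 1/(2*(1-e))"
  proof -
    have "M * J2 = (T powr e * T powr (1-e)) * (S powr (q-2) * S powr (1-q)) / (2*(1-e))"
      unfolding M_def J2_def by (simp add: mult_ac)
    also have "T powr e * T powr (1-e) = T powr 1" using T0 by (simp add: powr_add[symmetric])
    also have "S powr (q-2) * S powr (1-q) = S powr (-1)" using T0 by (simp add: powr_add[symmetric])
    also have "T powr 1 * S powr (-1) / (2*(1-e)) \<le> 1/(2*(1-e))"
      using powr_mult_powr_neg_le_1[of T S 1] T0 T par by (intro divide_right_mono) auto
    finally show ?thesis .
  qed
  have b3: "M * J3 \<le> (2/3) powr (-qb) * 2 / (2-c)"
  proof -
    have "(2*T/3) powr (-qb) = (2/3) powr (-qb) * T powr (-qb)" using T0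
      by (simp add: powr_mult[symmetric])
    then have "M * J3 = (2/3) powr (-qb) * 2 * ((T powr e * T powr (-qb) * T powr (2-c)) * S powr (q-2)) / (2-c)"
      unfolding M_def J3_def by (simp add: mult_ac)
    also have "T powr e * T powr (-qb) * T powr (2-c) = T powr (e + -qb + (2-c))" using T0 by (simp add: powr_add[symmetric])
    also have "e + -qb + (2-c) = 2 - q" using ex by simp
    also have "S powr (q-2) = S powr (-(2-q))" by simp
    also have "(2/3) powr (-qb) * 2 * (T powr (2-q) * S powr (-(2-q))) / (2-c) \<le> (2/3) powr (-qb) * 2 * 1 / (2-c)"
      using powr_mult_powr_neg_le_1[of T S "2-q"] T0 T par by (intro divide_right_mono mult_left_mono) auto
    finally show ?thesis by simp
  qed
  have b4: "M * J4 \<le> 1/(2*(1-e))"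
  proof -
    have "M * J4 = (T powr e * T powr (1-q) * T powr (1-e)) * S powr (q-2) / (2*(1-e))"
      unfolding M_def J4_def by (simp add: mult_ac)
    also have "T powr e * T powr (1-q) * T powr (1-e) = T powr (e + (1-q) + (1-e))" using T0 by (simp add: powr_add[symmetric])
    also have "e + (1-q) + (1-e) = 2 - q" by simp
    also have "S powr (q-2) = S powr (-(2-q))" by simp
    also have "T powr (2-q) * S powr (-(2-q)) / (2*(1-e)) \<le> 1/(2*(1-e))"
      using powr_mult_powr_neg_le_1[of T S "2-q"] T0 T par by (intro divide_right_mono) auto
    finally show ?thesis .
  qed
  have b5: "M * J5 \<le> 1/(2*(2-q))"
  proof -
    have "M * J5 = (T powr e * T powr (-e)) * (S powr (q-2) * S powr (2-q)) / (2*(2-q))"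
      unfolding M_def J5_def by (simp add: mult_ac)
    also have "T powr e * T powr (-e) = 1" using T0 by (simp add: powr_add[symmetric])
    also have "S powr (q-2) * S powr (2-q) = 1" using T0 by (simp add: powr_add[symmetric])
    finally show ?thesis by simp
  qed
  have "W * (J1 + J2 + J3 + J4 + J5) \<le> L * M * (J1 + J2 + J3 + J4 + J5)"
    using W Enn unfolding M_def by (intro mult_right_mono) auto
  also have "\<dots> = L * (M * J1 + M * J2 + M * J3 + M * J4 + M * J5)"
    by (simp add: algebra_simps)
  also have "\<dots> \<le> L * (1/(2-c) + 1/(2*(1-e)) + (2/3) powr (-qb) * 2 / (2-c) + 1/(2*(1-e)) + 1/(2*(2-q)))"
    using b1 b2 b3 b4 b5 par by (intro mult_left_mono) auto
  finally show ?thesis unfolding J1_def J2_def J3_def J4_def J5_def .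
qed

lemma omega1t_Kplus_envelope_interior:
  assumes pr: "exponent_conditions p q mu"
  obtains C where "0 \<le> C"
    and "\<And>t r. 0 < r \<Longrightarrow> 1 \<le> t - r \<Longrightarrow> r < t / 2 \<Longrightarrow>
           omega1t p q mu t r / r * Kplus_envelope p q mu t r \<le> C"
proof -
  note f = exponent_conditionsD[OF pr]
  note ex = exponent_conditions_identities[OF pr]
  define e where "e = mu/p"
  define k where "k = mu/p + q - 2"
  define c where "c = q*(p-2)"
  define qb where "qb = q*(3-p+mu/(p*q))"
  have c2: "c < 2" unfolding c_def by (rule exponent_conditions_q_mult_p_minus_2_lt_2[OF pr])
  have e1: "e < 1" unfolding e_def by (rule exponent_conditions_mu_div_p_lt_1[OF pr])
  have e0: "0 < e" "0 < k" using ex unfolding e_def k_def by auto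
  define C where "C = 2 powr k * (1/(2-c) + 1/(2*(1-e)) + (2/3) powr (-qb) * 2 / (2-c)
    + 1/(2*(1-e)) + 3 powr (2-q)/(2*(2-q)))"
  show thesis
  proof (rule that)
    show "0 \<le> C" unfolding C_def using c2 e1 f by (intro mult_nonneg_nonneg add_nonneg_nonneg) auto
    fix t r :: real assume r0: "0 < r" and T: "1 \<le> t - r" and interior: "r < t / 2"
    have "omega1t p q mu t r / r = jb (t-r) powr k"
      unfolding omega1t_def k_def using interior r0 by simp
    also have "\<dots> \<le> 2 powr k * (t-r) powr k" using jb_powr_le_twice T e0 by auto
    finally have W: "omega1t p q mu t r / r \<le> 2 powr k * (t-r) powr k" .
    have W0: "0 \<le> omega1t p q mu t r / r" unfolding omega1t_def using r0 by simp
    have S3: "t + r \<le> 3 * (t-r)" using interior by simp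
    show "omega1t p q mu t r / r * Kplus_envelope p q mu t r \<le> C"
      unfolding C_def Kplus_envelope_def e_def k_def c_def qb_def
      by (rule Kplus_envelope_weight_interior)
        (use W S3 T W0 ex f c2 e1 e0 r0 in \<open>auto simp: e_def k_def c_def qb_def\<close>)
  qed
qed

lemma omega1t_Kplus_envelope_cone:
  assumes pr: "exponent_conditions p q mu"
  obtains C where "0 \<le> C"
    and "\<And>t r. 0 < r \<Longrightarrow> 1 \<le> t - r \<Longrightarrow> t / 2 \<le> r \<Longrightarrow>
           omega1t p q mu t r / r * Kplus_envelope p q mu t r \<le> C"
proof -
  note f = exponent_conditionsD[OF pr]
  note ex = exponent_conditions_identities[OF pr]
  define e where "e = mu/p"
  define k where "k = mu/p + q - 2"
  define c where "c = q*(p-2)"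
  define qb where "qb = q*(3-p+mu/(p*q))"
  define L where "L = 3 * 2 powr (e + q - 1)"
  have c2: "c < 2" unfolding c_def by (rule exponent_conditions_q_mult_p_minus_2_lt_2[OF pr])
  have e1: "e < 1" unfolding e_def by (rule exponent_conditions_mu_div_p_lt_1[OF pr])
  have e0: "0 < e" "0 < k" using ex unfolding e_def k_def by auto
  have L0: "0 \<le> L" unfolding L_def by simp
  define C where "C = L * (1/(2-c) + 1/(2*(1-e)) + (2/3) powr (-qb) * 2 / (2-c)
    + 1/(2*(1-e)) + 1/(2*(2-q)))"
  show thesis
  proof (rule that)
    show "0 \<le> C" unfolding C_def using c2 e1 f L0 by (intro mult_nonneg_nonneg add_nonneg_nonneg) auto
    fix t r :: real assume r0: "0 < r" and T: "1 \<le> t - r" and cone: "t / 2 \<le> r"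
    have tr: "0 < t + r" using r0 T by simp
    have a1: "jb (t-r) powr e \<le> 2 powr e * (t-r) powr e" using jb_powr_le_twice T e0 by auto
    have a2: "jb (t+r) powr (q-1) \<le> 2 powr (q-1) * (t+r) powr (q-1)"
      using jb_powr_le_twice[of "t+r" "q-1"] T f r0 by auto
    have a3: "1/r \<le> 3/(t+r)" using cone r0 tr by (simp add: divide_simps)
    have "omega1t p q mu t r / r = (jb (t-r) powr e * jb (t+r) powr (q-1)) * (1/r)"
      unfolding omega1t_def e_def using cone by simp
    also have "\<dots> \<le> ((2 powr e * (t-r) powr e) * (2 powr (q-1) * (t+r) powr (q-1))) * (3/(t+r))"
      using a1 a2 a3 r0 by (intro mult_mono) auto
    also have "\<dots> = 3 * (2 powr e * 2 powr (q-1)) * ((t-r) powr e * ((t+r) powr (q-1) / (t+r)))"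
      by (simp add: mult_ac)
    also have "(t+r) powr (q-1) / (t+r) = (t+r) powr (q-2)"
      using tr powr_add[of "t+r" "q-2" 1] by simp
    also have "2 powr e * 2 powr (q-1) = 2 powr (e + q - 1)"
      by (simp add: powr_add[symmetric] add_diff_eq)
    finally have W: "omega1t p q mu t r / r \<le> L * ((t-r) powr e * (t+r) powr (q-2))"
      unfolding L_def by (simp add: mult_ac)
    have W0: "0 \<le> omega1t p q mu t r / r" unfolding omega1t_def using r0 by simp
    show "omega1t p q mu t r / r * Kplus_envelope p q mu t r \<le> C"
      unfolding C_def Kplus_envelope_def e_def c_def qb_def
      by (rule Kplus_envelope_weight_cone[where k = k])
        (use W T W0 ex f c2 e1 e0 r0 L0 in \<open>auto simp: e_def k_def c_def qb_def\<close>)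
  qed
qed

lemma Kplus_eq_0_off_cone:
  assumes bound: "\<And>s \<rho>. \<rho> \<noteq> 0 \<Longrightarrow> \<bar>F s \<rho>\<bar> \<le> K * cone_weight \<omega> p s \<bar>\<rho>\<bar>"
    and r: "0 < r" and T: "t - r < 1"
  shows "Kplus F t r = 0"
proof -
  have vanish: "F s \<rho> = 0" if "s \<le> t" "\<rho> = r + t - s \<or> \<rho> = r - t + s" "\<rho> \<noteq> 0" for s \<rho>
  proof -
    have "cone_weight \<omega> p s \<bar>\<rho>\<bar> = 0"
      unfolding cone_weight_def using that r T by (auto simp: abs_if)
    then show ?thesis using bound[of \<rho> s] that(3) by simp
  qed
  have "(r + t - s) * F s (r + t - s) + (r - t + s) * F s (r - t + s) = 0" if "s \<in> {0..t}" for s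
    using that r vanish[of s] by (cases "r - t + s = 0") auto
  then have "integral {0..t} (\<lambda>s. (r + t - s) * F s (r + t - s) + (r - t + s) * F s (r - t + s))
      = integral {0..t} (\<lambda>_. 0::real)" by (rule integral_cong)
  then show ?thesis unfolding Kplus_def by simp
qed

lemma Kplus_weighted_bound:
  assumes pr: "exponent_conditions p q mu"
  obtains C where "0 < C"
    and "\<And>F K t r. 0 \<le> K \<Longrightarrow>
      (\<And>s \<rho>. \<rho> \<noteq> 0 \<Longrightarrow> \<bar>F s \<rho>\<bar> \<le> K * cone_weight (omega2t p q mu) q s \<bar>\<rho>\<bar>) \<Longrightarrow>
      0 \<le> r \<Longrightarrow> \<bar>omega1t p q mu t r / r * Kplus F t r\<bar> \<le> C * K"
proof -
  obtain C1 where C1: "0 \<le> C1" "\<And>t r. 0 < r \<Longrightarrow> 1 \<le> t - r \<Longrightarrow> r < t / 2 \<Longrightarrow>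
      omega1t p q mu t r / r * Kplus_envelope p q mu t r \<le> C1"
    using omega1t_Kplus_envelope_interior[OF pr] by blast
  obtain C2 where C2: "0 \<le> C2" "\<And>t r. 0 < r \<Longrightarrow> 1 \<le> t - r \<Longrightarrow> t / 2 \<le> r \<Longrightarrow>
      omega1t p q mu t r / r * Kplus_envelope p q mu t r \<le> C2"
    using omega1t_Kplus_envelope_cone[OF pr] by blast
  show thesis
  proof (rule that)
    show "0 < C1 + C2 + 1" using C1 C2 by simp
    fix F :: "real \<Rightarrow> real \<Rightarrow> real" and K t r :: real
    assume K: "0 \<le> K" and r: "0 \<le> r"
      and bound: "\<And>s \<rho>. \<rho> \<noteq> 0 \<Longrightarrow> \<bar>F s \<rho>\<bar> \<le> K * cone_weight (omega2t p q mu) q s \<bar>\<rho>\<bar>"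
    define W where "W = omega1t p q mu t r / r"
    show "\<bar>W * Kplus F t r\<bar> \<le> (C1 + C2 + 1) * K" unfolding W_def[symmetric]
    proof (cases "0 < r \<and> 1 \<le> t - r")
      case False
      then have "W * Kplus F t r = 0"
        using Kplus_eq_0_off_cone[OF bound] r unfolding W_def by (cases "r = 0") auto
      moreover have "0 \<le> (C1 + C2 + 1) * K" using K C1 C2 by simp
      ultimately show ?thesis by (metis abs_zero)
    next
      case True
      have W0: "0 \<le> W" unfolding W_def omega1t_def using True by simp
      have WE: "W * Kplus_envelope p q mu t r \<le> C1 + C2"
      proof (cases "r < t / 2")
        case interior: True
        have "W * Kplus_envelope p q mu t r \<le> C1" unfolding W_def by (rule C1(2)) (use True interior in auto)
        then show ?thesis using C2(1) by simp
      next
        case cone: False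
        have "W * Kplus_envelope p q mu t r \<le> C2" unfolding W_def by (rule C2(2)) (use True cone in auto)
        then show ?thesis using C1(1) by simp
      qed
      have "\<bar>W * Kplus F t r\<bar> = W * \<bar>Kplus F t r\<bar>" using W0 by (simp add: abs_mult)
      also have "\<dots> \<le> W * (K * Kplus_envelope p q mu t r / 2)"
        using W0 by (intro mult_left_mono abs_Kplus_le[OF pr K]) (use bound True in auto)
      also have "\<dots> = K * (W * Kplus_envelope p q mu t r) / 2" by simp
      also have "\<dots> \<le> K * (C1 + C2) / 2" using WE K by (intro divide_right_mono mult_left_mono) auto
      also have "\<dots> \<le> (C1 + C2 + 1) * K" using K C1 C2 by (simp add: algebra_simps)
      finally show ?thesis .
    qed
  qed
qed

section \<open>The estimate for Lop\<close>

lemma omega1t_powr_neg_mult_le: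
  assumes pr: "exponent_conditions p q mu" and s: "2 \<le> s" and \<rho>: "0 < \<rho>" "\<rho> \<le> s - 1"
  shows "\<rho> * omega1t p q mu s \<rho> powr (-p) \<le>
    2 powr (mu+p*q-2*p) * s powr (-(mu+p*q-2*p)) * \<rho> powr (1-p) + s powr (1 - p*(q-1)) * (s-\<rho>) powr (-mu)"
  (is "?L \<le> ?A + ?B")
proof -
  note f = exponent_conditionsD[OF pr]
  have a0: "0 < mu+p*q-2*p" using f by linarith
  have A0: "0 \<le> ?A" "0 \<le> ?B" by auto
  show ?thesis
  proof (cases "\<rho> < s/2")
    case True
    have "omega1t p q mu s \<rho> powr (-p) = \<rho> powr (-p) * jb (s-\<rho>) powr (-(mu + p*q - 2*p))"
      using omega1t_powr_neg_interior[of p \<rho> s q mu] f True \<rho> by simp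
    also have "\<dots> \<le> \<rho> powr (-p) * (s/2) powr (-(mu + p*q - 2*p))"
    proof -
      have "jb (s-\<rho>) powr (-(mu + p*q - 2*p)) \<le> (s-\<rho>) powr (-(mu + p*q - 2*p))"
        using True \<rho> a0 by (intro jb_powr_neg_le) auto
      also have "\<dots> \<le> (s/2) powr (-(mu + p*q - 2*p))"
        using True s a0 by (intro powr_mono2') auto
      finally show ?thesis by (intro mult_left_mono) auto
    qed
    finally have "?L \<le> \<rho> * (\<rho> powr (-p) * (s/2) powr (-(mu + p*q - 2*p)))"
      using \<rho> by (intro mult_left_mono) auto
    also have "\<dots> = ?A" using \<rho> s half_powr_neg[of s "mu + p*q - 2*p"] powr_mult_base[OF less_imp_le[OF \<rho>(1)], of "-p"]
      by (simp add: mult_ac)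
    finally show ?thesis using A0 by linarith
  next
    case False
    have "omega1t p q mu s \<rho> powr (-p) = jb (s-\<rho>) powr (-mu) * jb (s+\<rho>) powr (-(p*(q-1)))"
      using omega1t_powr_neg_cone[of p s \<rho> q mu] f False by simp
    also have "\<dots> \<le> (s-\<rho>) powr (-mu) * s powr (-(p*(q-1)))"
    proof (rule mult_mono)
      show "jb (s-\<rho>) powr (-mu) \<le> (s-\<rho>) powr (-mu)" using \<rho> f by (intro jb_powr_neg_le) auto
      have "jb (s+\<rho>) powr (-(p*(q-1))) \<le> (s+\<rho>) powr (-(p*(q-1)))" using \<rho> s f by (intro jb_powr_neg_le) auto
      also have "\<dots> \<le> s powr (-(p*(q-1)))" using \<rho> s f by (intro powr_mono2') auto
      finally show "jb (s+\<rho>) powr (-(p*(q-1))) \<le> s powr (-(p*(q-1)))" .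
    qed auto
    finally have "?L \<le> \<rho> * ((s-\<rho>) powr (-mu) * s powr (-(p*(q-1))))"
      using \<rho> by (intro mult_left_mono) auto
    also have "\<dots> \<le> s * ((s-\<rho>) powr (-mu) * s powr (-(p*(q-1))))"
      using \<rho> by (intro mult_right_mono) auto
    also have "\<dots> = ?B" using powr_mult_base[of s "-(p*(q-1))"] s by (simp add: mult_ac)
    finally show ?thesis using A0 by linarith
  qed
qed

(* The integral of the bound of omega1t_powr_neg_mult_le over [\<bar>r - t + s\<bar>, min (t + r - s) (s - 1)]. *)
definition Lop_slice_bound :: "real \<Rightarrow> real \<Rightarrow> real \<Rightarrow> real \<Rightarrow> real \<Rightarrow> real \<Rightarrow> real" where
  "Lop_slice_bound p q mu t r s = (if \<bar>s-(t-r)\<bar> \<le> s - 1 then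
      2 powr (mu+p*q-2*p) * s powr (-(mu+p*q-2*p)) *
        ((\<bar>s-(t-r)\<bar> powr (2-p) - (min (t+r-s) (s-1)) powr (2-p)) / (p-2))
    + s powr (1 - p*(q-1)) *
        (((s - \<bar>s-(t-r)\<bar>) powr (1-mu) - (s - min (t+r-s) (s-1)) powr (1-mu)) / (1-mu))
    else 0)"

lemma has_integral_Lop_slice_integrand:
  assumes pr: "exponent_conditions p q mu" and \<alpha>0: "0 < \<alpha>" and ab: "\<alpha> \<le> \<beta>" and sb: "1 \<le> s - \<beta>"
  shows "((\<lambda>x. 2 powr (mu+p*q-2*p) * s powr (-(mu+p*q-2*p)) * x powr (1-p) + s powr (1 - p*(q-1)) * (s-x) powr (-mu))
      has_integral 2 powr (mu+p*q-2*p) * s powr (-(mu+p*q-2*p)) * ((\<alpha> powr (2-p) - \<beta> powr (2-p)) / (p-2))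
        + s powr (1 - p*(q-1)) * (((s-\<alpha>) powr (1-mu) - (s-\<beta>) powr (1-mu)) / (1-mu))) {\<alpha>..\<beta>}"
proof -
  note f = exponent_conditionsD[OF pr]
  have int_powr: "((\<lambda>x. (1*x+0) powr (1-p)) has_integral ((1*\<beta>+0) powr (1-p+1) - (1*\<alpha>+0) powr (1-p+1)) / (1*(1-p+1))) {\<alpha>..\<beta>}"
    by (rule has_integral_affine_powr) (use ab \<alpha>0 f in auto)
  have int_powr': "((\<lambda>x. x powr (1-p)) has_integral (\<alpha> powr (2-p) - \<beta> powr (2-p)) / (p-2)) {\<alpha>..\<beta>}"
  proof -
    have "((1*\<beta>+0) powr (1-p+1) - (1*\<alpha>+0) powr (1-p+1)) / (1*(1-p+1)) = (\<alpha> powr (2-p) - \<beta> powr (2-p)) / (p-2)"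
      using f by (simp add: field_simps)
    then show ?thesis using int_powr by simp
  qed
  have int_rev: "((\<lambda>x. ((-1)*x+s) powr (-mu)) has_integral (((-1)*\<beta>+s) powr (-mu+1) - ((-1)*\<alpha>+s) powr (-mu+1)) / ((-1)*(-mu+1))) {\<alpha>..\<beta>}"
    by (rule has_integral_affine_powr) (use ab sb f in auto)
  have int_rev': "((\<lambda>x. (s-x) powr (-mu)) has_integral ((s-\<alpha>) powr (1-mu) - (s-\<beta>) powr (1-mu)) / (1-mu)) {\<alpha>..\<beta>}"
  proof -
    have "(((-1)*\<beta>+s) powr (-mu+1) - ((-1)*\<alpha>+s) powr (-mu+1)) / ((-1)*(-mu+1)) = ((s-\<alpha>) powr (1-mu) - (s-\<beta>) powr (1-mu)) / (1-mu)"
      using f by (simp add: field_simps)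
    then show ?thesis using int_rev by simp
  qed
  show ?thesis by (intro has_integral_add has_integral_mult_right int_powr' int_rev')
qed

lemma abs_Lop_slice_le:
  assumes pr: "exponent_conditions p q mu" and K: "0 \<le> K"
    and Fb: "\<forall>s \<rho>. \<rho> \<noteq> 0 \<longrightarrow> \<bar>F s \<rho>\<bar> \<le> K * cone_weight (omega1t p q mu) p s \<bar>\<rho>\<bar>"
    and Fc: "continuous_on UNIV (F s)" and Fe: "\<And>\<rho>. F s (-\<rho>) = F s \<rho>"
    and s2: "2 \<le> s" and st: "s \<le> t" and r: "0 \<le> r" and sT: "s \<noteq> t - r"
  shows "\<bar>integral {r-t+s..r+t-s} (\<lambda>\<rho>. \<rho> * F s \<rho>)\<bar> \<le> K * Lop_slice_bound p q mu t r s"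
proof -
  note f = exponent_conditionsD[OF pr]
  define \<alpha> where "\<alpha> = \<bar>s-(t-r)\<bar>"
  define \<beta> where "\<beta> = min (t+r-s) (s-1)"
  define a where "a = mu+p*q-2*p"
  have a0: "0 < a" using f unfolding a_def by linarith
  have \<alpha>0: "0 < \<alpha>" using sT unfolding \<alpha>_def by auto
  have cf: "continuous_on UNIV (\<lambda>\<rho>. \<rho> * F s \<rho>)" using Fc by (intro continuous_intros) auto
  have supp: "\<rho> * F s \<rho> = 0" if "\<rho> > s - 1" for \<rho>
  proof -
    have "\<bar>F s \<rho>\<bar> \<le> K * cone_weight (omega1t p q mu) p s \<bar>\<rho>\<bar>" using spec[OF spec[OF Fb, of s], of \<rho>] that s2 by simp
    moreover have "cone_weight (omega1t p q mu) p s \<bar>\<rho>\<bar> = 0" unfolding cone_weight_def using that s2 by auto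
    ultimately show ?thesis by simp
  qed
  have red: "integral {r-t+s..r+t-s} (\<lambda>\<rho>. \<rho> * F s \<rho>) =
     (if \<bar>r-t+s\<bar> \<le> s - 1 then integral {\<bar>r-t+s\<bar>..min (r+t-s) (s-1)} (\<lambda>\<rho>. \<rho> * F s \<rho>) else 0)"
    by (rule integral_odd_truncate[OF cf _ supp]) (use Fe st r in \<open>auto simp: abs_le_iff\<close>)
  have e1: "\<bar>r-t+s\<bar> = \<alpha>" "r+t-s = t+r-s" unfolding \<alpha>_def by auto
  show ?thesis
  proof (cases "\<alpha> \<le> s - 1")
    case False
    then show ?thesis using red e1(1) K unfolding Lop_slice_bound_def \<alpha>_def by simp
  next
    case True
    have ab: "\<alpha> \<le> \<beta>" using True st r unfolding \<beta>_def \<alpha>_def by auto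
    have sb: "1 \<le> s - \<beta>" unfolding \<beta>_def by auto
    define B where "B = 2 powr a * s powr (-a) * ((\<alpha> powr (2-p) - \<beta> powr (2-p)) / (p-2))
      + s powr (1 - p*(q-1)) * (((s-\<alpha>) powr (1-mu) - (s-\<beta>) powr (1-mu)) / (1-mu))"
    have HB: "((\<lambda>x. K * (2 powr a * s powr (-a) * x powr (1-p) + s powr (1 - p*(q-1)) * (s-x) powr (-mu))) has_integral K * B) {\<alpha>..\<beta>}"
      unfolding B_def a_def
      by (intro has_integral_mult_right has_integral_Lop_slice_integrand[OF pr \<alpha>0 ab sb])
    have pt: "\<bar>x * F s x\<bar> \<le> K * (2 powr a * s powr (-a) * x powr (1-p) + s powr (1 - p*(q-1)) * (s-x) powr (-mu))"
      if x: "x \<in> {\<alpha>..\<beta>} - {}" for x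
    proof -
      have x0: "0 < x" "x \<le> s - 1" using x \<alpha>0 unfolding \<beta>_def by auto
      have "\<bar>F s x\<bar> \<le> K * cone_weight (omega1t p q mu) p s x" using spec[OF spec[OF Fb, of s], of x] x0 by simp
      also have "\<dots> = K * omega1t p q mu s x powr (-p)" unfolding cone_weight_def using s2 x0 by simp
      finally have "x * \<bar>F s x\<bar> \<le> x * (K * omega1t p q mu s x powr (-p))" using x0 by (intro mult_left_mono) auto
      also have "\<dots> = K * (x * omega1t p q mu s x powr (-p))" by simp
      also have "\<dots> \<le> K * (2 powr a * s powr (-a) * x powr (1-p) + s powr (1 - p*(q-1)) * (s-x) powr (-mu))"
        using omega1t_powr_neg_mult_le[OF pr s2 x0] K unfolding a_def by (intro mult_left_mono) auto
      finally show ?thesis using x0 by (simp add: abs_mult)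
    qed
    have B0: "0 \<le> K * B"
      by (rule has_integral_nonneg[OF HB]) (use K sb in \<open>auto intro!: mult_nonneg_nonneg add_nonneg_nonneg\<close>)
    have "\<bar>integral {\<alpha>..\<beta>} (\<lambda>\<rho>. \<rho> * F s \<rho>)\<bar> \<le> K * B"
      by (rule abs_integral_le_has_integral[OF HB _ pt B0, of "{}"]) simp
    moreover have "integral {r-t+s..r+t-s} (\<lambda>\<rho>. \<rho> * F s \<rho>) = integral {\<alpha>..\<beta>} (\<lambda>\<rho>. \<rho> * F s \<rho>)"
    proof -
      have e2: "min (r+t-s) (s-1) = \<beta>" unfolding \<beta>_def by (simp add: add.commute)
      show ?thesis using red True unfolding e1(1) e2 by simp
    qed
    moreover have "Lop_slice_bound p q mu t r s = B" unfolding Lop_slice_bound_def B_def using True unfolding \<alpha>_def \<beta>_def a_def by simp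
    ultimately show ?thesis by simp
  qed
qed

lemma cone_interval_facts:
  fixes s t r :: real
  assumes r: "0 \<le> r" and st: "s \<le> t" and h: "\<bar>s-(t-r)\<bar> \<le> s - 1"
  shows "\<bar>s-(t-r)\<bar> \<le> min (t+r-s) (s-1)"
    "min (t+r-s) (s-1) - \<bar>s-(t-r)\<bar> \<le> 2*r"
    "1 \<le> s - min (t+r-s) (s-1)"
    "s - \<bar>s-(t-r)\<bar> \<le> 2* s - (t-r)"
    "s - \<bar>s-(t-r)\<bar> \<le> t - r"
    "((t-r)+1)/2 \<le> s"
    "2* s - (t+r) \<le> s - min (t+r-s) (s-1)"
    "1 \<le> s - \<bar>s-(t-r)\<bar>"
  using assms by (cases "s < t - r"; auto simp: abs_if min_def; linarith)+

definition Lop_majorant_interior :: "real \<Rightarrow> real \<Rightarrow> real \<Rightarrow> real \<Rightarrow> real \<Rightarrow> real \<Rightarrow> real" where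
  "Lop_majorant_interior p q mu t r s =
    4 powr (mu+p*q-2*p) * (t-r) powr (-(mu+p*q-2*p)) *
      ((if 0 \<le> s \<and> s \<le> t-r-r then 2*r*((t-r)-s) powr (1-p) else 0)
     + (if t-r-r \<le> s \<and> s \<le> t then (1/(p-2)) * \<bar>s-(t-r)\<bar> powr (2-p) else 0))
  + 2 powr (p*(q-1)-1) * (t-r) powr (1-p*(q-1)) *
      ((if (t-r)/2 \<le> s \<and> s \<le> (t+r)/2 then (2*r) powr (1-mu)/(1-mu) else 0)
     + (if (t+r)/2 \<le> s \<and> s \<le> t then 2*r*(2* s-(t+r)) powr (-mu) else 0))"

lemma Lop_majorant_interior_nonneg: "exponent_conditions p q mu \<Longrightarrow> 0 \<le> r \<Longrightarrow> 0 \<le> Lop_majorant_interior p q mu t r s"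
  unfolding Lop_majorant_interior_def using exponent_conditionsD[of p q mu]
  by (intro add_nonneg_nonneg mult_nonneg_nonneg) auto

lemma Lop_slice_bound_le_interior:
  assumes pr: "exponent_conditions p q mu" and r: "0 < r" and T: "1 \<le> t - r" and rT: "r < t - r"
    and s: "0 \<le> s" "s \<le> t" and sT: "s \<noteq> t - r"
  shows "Lop_slice_bound p q mu t r s \<le> Lop_majorant_interior p q mu t r s"
proof (cases "\<bar>s-(t-r)\<bar> \<le> s - 1")
  case False
  then show ?thesis using Lop_majorant_interior_nonneg[OF pr, of r t s] r unfolding Lop_slice_bound_def by simp
next
  case True
  note f = exponent_conditionsD[OF pr]
  note ab = cone_interval_facts[OF less_imp_le[OF r] s(2) True] r
  define T where "T = t - r"
  define S where "S = t + r"
  define \<alpha> where "\<alpha> = \<bar>s-(t-r)\<bar>"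
  define \<beta> where "\<beta> = min (t+r-s) (s-1)"
  define a where "a = mu+p*q-2*p"
  define bt where "bt = p*(q-1)"
  have a0: "0 < a" using f unfolding a_def by linarith
  have bt2: "2 < bt" using f unfolding bt_def by (simp add: algebra_simps)
  have \<alpha>0: "0 < \<alpha>" using sT unfolding \<alpha>_def by auto
  have sT2: "T/2 \<le> s" "0 < T" using ab T unfolding T_def by auto
  have s0: "0 < s" using sT2 by simp
  define X1 where "X1 = (\<alpha> powr (2-p) - \<beta> powr (2-p)) / (p-2)"
  define X2 where "X2 = ((s - \<alpha>) powr (1-mu) - (s - \<beta>) powr (1-mu)) / (1-mu)"
  have PsiE: "Lop_slice_bound p q mu t r s = 2 powr a * s powr (-a) * X1 + s powr (1 - bt) * X2"
    unfolding Lop_slice_bound_def X1_def X2_def \<alpha>_def \<beta>_def a_def bt_def using True by simp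
  have X1nn: "0 \<le> X1"
  proof -
    have "\<beta> powr (2-p) \<le> \<alpha> powr (2-p)" using ab \<alpha>0 f unfolding \<alpha>_def \<beta>_def by (intro powr_mono2') auto
    then show ?thesis unfolding X1_def using f by simp
  qed
  have X2nn: "0 \<le> X2"
  proof -
    have "(s - \<beta>) powr (1-mu) \<le> (s - \<alpha>) powr (1-mu)" using ab f unfolding \<alpha>_def \<beta>_def by (intro powr_mono2) auto
    then show ?thesis unfolding X2_def using f by simp
  qed
  define w1 where "w1 = (if 0 \<le> s \<and> s \<le> t-r-r then 2*r*((t-r)-s) powr (1-p) else 0)"
  define w2 where "w2 = (if t-r-r \<le> s \<and> s \<le> t then (1/(p-2)) * \<bar>s-(t-r)\<bar> powr (2-p) else 0)"
  define w3 where "w3 = (if (t-r)/2 \<le> s \<and> s \<le> (t+r)/2 then (2*r) powr (1-mu)/(1-mu) else 0)"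
  define w4 where "w4 = (if (t+r)/2 \<le> s \<and> s \<le> t then 2*r*(2* s-(t+r)) powr (-mu) else 0)"
  have wnn: "0 \<le> w1" "0 \<le> w2" "0 \<le> w3" "0 \<le> w4" unfolding w1_def w2_def w3_def w4_def using f r by auto
  have X1le: "X1 \<le> w1 + w2"
  proof (cases "s \<le> t-r-r")
    case True
    have "X1 \<le> (\<beta> - \<alpha>) * \<alpha> powr (1-p)" unfolding X1_def
      by (rule powr_antiderivative_le_left) (use \<alpha>0 ab f in \<open>auto simp: \<alpha>_def \<beta>_def\<close>)
    also have "\<dots> \<le> 2*r * \<alpha> powr (1-p)" using ab unfolding \<alpha>_def \<beta>_def by (intro mult_right_mono) auto
    also have "\<alpha> = (t-r) - s" using True r unfolding \<alpha>_def by auto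
    finally have "X1 \<le> w1" unfolding w1_def using True s by simp
    then show ?thesis using wnn by linarith
  next
    case False
    have "X1 \<le> \<alpha> powr (2-p) / (p-2)" unfolding X1_def using f by (intro divide_right_mono) auto
    then have "X1 \<le> w2" unfolding w2_def \<alpha>_def using False s by simp
    then show ?thesis using wnn by linarith
  qed
  have X2le: "X2 \<le> w3 + w4"
  proof (cases "s \<le> (t+r)/2")
    case True
    have "X2 \<le> (s - \<alpha>) powr (1-mu) / (1-mu)" unfolding X2_def using f by (intro divide_right_mono) auto
    also have "\<dots> \<le> (2*r) powr (1-mu) / (1-mu)"
    proof -
      have "2 * s \<le> t + r" using True by simp
      then have "s - \<alpha> \<le> 2*r" using ab unfolding \<alpha>_def by linarith
      then have "(s - \<alpha>) powr (1-mu) \<le> (2*r) powr (1-mu)" using ab f unfolding \<alpha>_def by (intro powr_mono2) auto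
      then show ?thesis using f by (intro divide_right_mono) auto
    qed
    finally have "X2 \<le> w3" unfolding w3_def using True sT2 unfolding T_def by simp
    then show ?thesis using wnn by linarith
  next
    case False
    have "X2 \<le> (\<beta> - \<alpha>) * (s - \<beta>) powr (-mu)" unfolding X2_def
      by (rule powr_antiderivative_le_right) (use ab f in \<open>auto simp: \<alpha>_def \<beta>_def\<close>)
    also have "\<dots> \<le> 2*r * (2* s-(t+r)) powr (-mu)"
    proof (rule mult_mono)
      show "\<beta> - \<alpha> \<le> 2*r" using ab unfolding \<alpha>_def \<beta>_def by simp
      show "(s - \<beta>) powr (-mu) \<le> (2* s-(t+r)) powr (-mu)"
        using ab False f unfolding \<beta>_def by (intro powr_mono2') auto
    qed (use r in auto)
    finally have "X2 \<le> w4" unfolding w4_def using False s by simp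
    then show ?thesis using wnn by linarith
  qed
  have c1: "2 powr a * s powr (-a) \<le> 4 powr a * (t-r) powr (-a)"
  proof -
    have "2 powr a * s powr (-a) \<le> 2 powr a * (2 powr a * T powr (-a))"
      using powr_neg_le_of_half_le[of T s a] sT2 a0 by (intro mult_left_mono) auto
    also have "\<dots> = 4 powr a * T powr (-a)" by (simp add: mult.assoc[symmetric] powr_mult[symmetric])
    finally show ?thesis unfolding T_def .
  qed
  have c2: "s powr (1 - bt) \<le> 2 powr (bt - 1) * (t-r) powr (1 - bt)"
    using powr_neg_le_of_half_le[of T s "bt-1"] sT2 bt2 unfolding T_def by simp
  have "Lop_slice_bound p q mu t r s \<le> (4 powr a * (t-r) powr (-a)) * (w1 + w2) + (2 powr (bt - 1) * (t-r) powr (1 - bt)) * (w3 + w4)"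
    unfolding PsiE
  proof (rule add_mono)
    show "2 powr a * s powr (-a) * X1 \<le> 4 powr a * (t-r) powr (-a) * (w1 + w2)"
      by (rule mult_mono[OF c1 X1le]) (use X1nn in auto)
    show "s powr (1 - bt) * X2 \<le> 2 powr (bt - 1) * (t-r) powr (1 - bt) * (w3 + w4)"
      by (rule mult_mono[OF c2 X2le]) (use X2nn in auto)
  qed
  also have "\<dots> = Lop_majorant_interior p q mu t r s" unfolding Lop_majorant_interior_def w1_def w2_def w3_def w4_def a_def bt_def by simp
  finally show ?thesis .
qed

definition Lop_envelope_interior :: "real \<Rightarrow> real \<Rightarrow> real \<Rightarrow> real \<Rightarrow> real \<Rightarrow> real" where
  "Lop_envelope_interior p q mu t r =
    4 powr (mu+p*q-2*p) * (t-r) powr (-(mu+p*q-2*p)) *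
      (2 * r powr (3-p) / (p-2) + 2 * r powr (3-p) / ((3-p)*(p-2)))
  + 2 powr (p*(q-1)-1) * (t-r) powr (1-p*(q-1)) *
      (2 powr (1-mu) * r powr (2-mu) / (1-mu) + r * (t-r) powr (1-mu) / (1-mu))"

lemma Lop_majorant_interior_integral:
  assumes pr: "exponent_conditions p q mu" and r: "0 < r" and T: "1 \<le> t - r" and rT: "r < t - r"
  shows "\<exists>V. (Lop_majorant_interior p q mu t r has_integral V) {0..t} \<and> V \<le> Lop_envelope_interior p q mu t r"
proof -
  note f = exponent_conditionsD[OF pr]
  define T where "T = t - r"
  define S where "S = t + r"
  define A where "A = 4 powr (mu+p*q-2*p) * (t-r) powr (-(mu+p*q-2*p))"
  define B where "B = 2 powr (p*(q-1)-1) * (t-r) powr (1-p*(q-1))"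
  have A0: "0 \<le> A" "0 \<le> B" unfolding A_def B_def by auto
  have TT: "0 < T" "r < T" "T \<le> t" unfolding T_def using T rT r by auto
  have i1a: "((\<lambda>s. ((-1)* s + T) powr (1-p)) has_integral
      (((-1)*(t-r-r) + T) powr (1-p+1) - ((-1)*0 + T) powr (1-p+1)) / ((-1)*(1-p+1))) {0..t-r-r}"
    by (rule has_integral_affine_powr) (use TT f r in \<open>auto simp: T_def\<close>)
  have e1: "(((-1)*(t-r-r) + T) powr (1-p+1) - ((-1)*0 + T) powr (1-p+1)) / ((-1)*(1-p+1))
      = (r powr (2-p) - T powr (2-p)) / (p-2)" using f by (simp add: T_def field_simps)
  have i1: "((\<lambda>s. if 0 \<le> s \<and> s \<le> t-r-r then 2*r*((t-r)-s) powr (1-p) else 0) has_integral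
      2*r*((r powr (2-p) - T powr (2-p)) / (p-2))) {0..t}"
  proof -
    have "((\<lambda>s. 2*r*((t-r)-s) powr (1-p)) has_integral 2*r*((r powr (2-p) - T powr (2-p)) / (p-2))) {0..t-r-r}"
      using has_integral_mult_right[OF i1a, of "2*r"] unfolding e1 by (simp add: T_def)
    note W = this
    show ?thesis by (rule has_integral_restrict_subinterval[OF _ _ _ W]) (use TT in \<open>auto simp: T_def\<close>)
  qed
  have i2a: "((\<lambda>s. \<bar>s - T\<bar> powr (2-p)) has_integral ((T-(t-r-r)) powr (2-p+1) + (t-T) powr (2-p+1))/(2-p+1)) {t-r-r..t}"
    by (rule has_integral_abs_diff_powr) (use TT f in \<open>auto simp: T_def\<close>)
  have i2: "((\<lambda>s. if t-r-r \<le> s \<and> s \<le> t then (1/(p-2)) * \<bar>s-(t-r)\<bar> powr (2-p) else 0) has_integral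
      (1/(p-2)) * ((r powr (3-p) + r powr (3-p))/(3-p))) {0..t}"
  proof -
    have e2: "((T-(t-r-r)) powr (2-p+1) + (t-T) powr (2-p+1))/(2-p+1) = (r powr (3-p) + r powr (3-p))/(3-p)"
      by (simp add: T_def)
    have "((\<lambda>s. (1/(p-2)) * \<bar>s-(t-r)\<bar> powr (2-p)) has_integral (1/(p-2)) * ((r powr (3-p) + r powr (3-p))/(3-p))) {t-r-r..t}"
      using has_integral_mult_right[OF i2a, of "1/(p-2)"] unfolding e2 by (simp add: T_def)
    note W = this
    show ?thesis by (rule has_integral_restrict_subinterval[OF _ _ _ W]) (use TT in \<open>auto simp: T_def\<close>)
  qed
  have i3: "((\<lambda>s. if (t-r)/2 \<le> s \<and> s \<le> (t+r)/2 then (2*r) powr (1-mu)/(1-mu) else 0) has_integral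
      (2*r) powr (1-mu)/(1-mu) * r) {0..t}"
  proof -
    have "((\<lambda>s. (2*r) powr (1-mu)/(1-mu)) has_integral (2*r) powr (1-mu)/(1-mu) * r) {(t-r)/2..(t+r)/2}"
      using has_integral_const_real[of "(2*r) powr (1-mu)/(1-mu)" "(t-r)/2" "(t+r)/2"] r by (simp add: field_simps)
    note W = this
    show ?thesis by (rule has_integral_restrict_subinterval[OF _ _ _ W]) (use TT r in \<open>auto simp: T_def\<close>)
  qed
  have i4a: "((\<lambda>s. (2* s + (-S)) powr (-mu)) has_integral
      ((2*t + (-S)) powr (-mu+1) - (2*(S/2) + (-S)) powr (-mu+1)) / (2*(-mu+1))) {S/2..t}"
    by (rule has_integral_affine_powr) (use TT f r in \<open>auto simp: T_def S_def\<close>)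
  have i4: "((\<lambda>s. if (t+r)/2 \<le> s \<and> s \<le> t then 2*r*(2* s-(t+r)) powr (-mu) else 0) has_integral
      2*r*(T powr (1-mu) / (2*(1-mu)))) {0..t}"
  proof -
    have e4: "((2*t + (-S)) powr (-mu+1) - (2*(S/2) + (-S)) powr (-mu+1)) / (2*(-mu+1)) = T powr (1-mu) / (2*(1-mu))"
    proof -
      have h: "2*t + (-S) = T" "2*(S/2) + (-S) = 0" by (simp_all add: S_def T_def field_simps)
      show ?thesis unfolding h by simp
    qed
    have "((\<lambda>s. 2*r*(2* s-(t+r)) powr (-mu)) has_integral 2*r*(T powr (1-mu) / (2*(1-mu)))) {(t+r)/2..t}"
      using has_integral_mult_right[OF i4a, of "2*r"] unfolding e4 by (simp add: S_def algebra_simps)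
    note W = this
    show ?thesis by (rule has_integral_restrict_subinterval[OF _ _ _ W]) (use TT r in \<open>auto simp: T_def\<close>)
  qed
  have all: "((\<lambda>s. Lop_majorant_interior p q mu t r s) has_integral
     A * (2*r*((r powr (2-p) - T powr (2-p)) / (p-2)) + (1/(p-2)) * ((r powr (3-p) + r powr (3-p))/(3-p)))
   + B * ((2*r) powr (1-mu)/(1-mu) * r + 2*r*(T powr (1-mu) / (2*(1-mu))))) {0..t}"
    unfolding Lop_majorant_interior_def A_def[symmetric] B_def[symmetric]
    by (intro has_integral_add has_integral_mult_right i1 i2 i3 i4)
  have le: "A * (2*r*((r powr (2-p) - T powr (2-p)) / (p-2)) + (1/(p-2)) * ((r powr (3-p) + r powr (3-p))/(3-p)))
   + B * ((2*r) powr (1-mu)/(1-mu) * r + 2*r*(T powr (1-mu) / (2*(1-mu)))) \<le> Lop_envelope_interior p q mu t r"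
  proof -
    have m1: "r * r powr (2-p) = r powr (3-p)" using powr_mult_base[OF less_imp_le[OF r], of "2-p"] by simp
    have m2: "(2*r) powr (1-mu) * r = 2 powr (1-mu) * r powr (2-mu)"
      using powr_mult_base[OF less_imp_le[OF r], of "1-mu"] r by (simp add: powr_mult mult_ac)
    have L1: "2*r*((r powr (2-p) - T powr (2-p)) / (p-2)) \<le> 2 * r powr (3-p) / (p-2)"
    proof -
      have "2*r*((r powr (2-p) - T powr (2-p)) / (p-2)) \<le> 2*r*(r powr (2-p) / (p-2))"
        using f r by (intro mult_left_mono divide_right_mono) auto
      moreover have "2*r*(r powr (2-p) / (p-2)) = 2 * r powr (3-p) / (p-2)" unfolding m1[symmetric] by simp
      ultimately show ?thesis by (rule ord_le_eq_trans)
    qed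
    have L2: "(1/(p-2)) * ((r powr (3-p) + r powr (3-p))/(3-p)) = 2 * r powr (3-p) / ((3-p)*(p-2))"
      by (simp add: field_simps)
    have L3: "(2*r) powr (1-mu)/(1-mu) * r + 2*r*(T powr (1-mu) / (2*(1-mu)))
        = 2 powr (1-mu) * r powr (2-mu) / (1-mu) + r * (t-r) powr (1-mu) / (1-mu)"
    proof -
      have mu1: "1 - mu \<noteq> 0" using f by simp
      have "2*r*(T powr (1-mu) / (2*(1-mu))) = r * (t-r) powr (1-mu) / (1-mu)" using mu1 by (simp add: T_def field_simps)
      moreover have "(2*r) powr (1-mu)/(1-mu) * r = 2 powr (1-mu) * r powr (2-mu) / (1-mu)" using m2 by simp
      ultimately show ?thesis by simp
    qed
    have s1: "2*r*((r powr (2-p) - T powr (2-p)) / (p-2)) + (1/(p-2)) * ((r powr (3-p) + r powr (3-p))/(3-p))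
       \<le> 2 * r powr (3-p) / (p-2) + 2 * r powr (3-p) / ((3-p)*(p-2))" using L1 L2 by linarith
    show ?thesis unfolding Lop_envelope_interior_def A_def[symmetric] B_def[symmetric] L3
      using mult_left_mono[OF s1 A0(1)] by simp
  qed
  show ?thesis using all le by blast
qed

definition Lop_majorant_cone :: "real \<Rightarrow> real \<Rightarrow> real \<Rightarrow> real \<Rightarrow> real \<Rightarrow> real \<Rightarrow> real" where
  "Lop_majorant_cone p q mu t r s =
    4 powr (mu+p*q-2*p) * (t-r) powr (-(mu+p*q-2*p)) *
      (if 0 \<le> s \<and> s \<le> min (2*(t-r)) t then (1/(p-2)) * \<bar>s-(t-r)\<bar> powr (2-p) else 0)
  + (2 powr (mu+p*q-2*p) * 2 powr (p-2) / (p-2)) *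
      (if min (2*(t-r)) t \<le> s \<and> s \<le> t then s powr (2-p-(mu+p*q-2*p)) else 0)
  + ((t-r) powr (1-mu) / (1-mu)) *
      (if (t-r)/2 \<le> s \<and> s \<le> t then s powr (1-p*(q-1)) else 0)"

lemma Lop_majorant_cone_nonneg: "exponent_conditions p q mu \<Longrightarrow> 0 \<le> Lop_majorant_cone p q mu t r s"
  unfolding Lop_majorant_cone_def using exponent_conditionsD[of p q mu]
  by (intro add_nonneg_nonneg mult_nonneg_nonneg) auto

lemma Lop_slice_bound_le_cone:
  assumes pr: "exponent_conditions p q mu" and r: "0 < r" and T: "1 \<le> t - r" and rT: "t - r \<le> r"
    and s: "0 \<le> s" "s \<le> t" and sT: "s \<noteq> t - r"
  shows "Lop_slice_bound p q mu t r s \<le> Lop_majorant_cone p q mu t r s"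
proof (cases "\<bar>s-(t-r)\<bar> \<le> s - 1")
  case False
  then show ?thesis using Lop_majorant_cone_nonneg[OF pr, of t r s] unfolding Lop_slice_bound_def by simp
next
  case True
  note f = exponent_conditionsD[OF pr]
  note ab = cone_interval_facts[OF less_imp_le[OF r] s(2) True] r
  define T where "T = t - r"
  define \<alpha> where "\<alpha> = \<bar>s-(t-r)\<bar>"
  define \<beta> where "\<beta> = min (t+r-s) (s-1)"
  define a where "a = mu+p*q-2*p"
  define bt where "bt = p*(q-1)"
  define m where "m = min (2*(t-r)) t"
  have a0: "0 < a" using f unfolding a_def by linarith
  have bt2: "2 < bt" using f unfolding bt_def by (simp add: algebra_simps)
  have \<alpha>0: "0 < \<alpha>" using sT unfolding \<alpha>_def by auto
  have sT2: "T/2 \<le> s" "0 < T" using ab T unfolding T_def by auto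
  have s0: "0 < s" using sT2 by simp
  define X1 where "X1 = (\<alpha> powr (2-p) - \<beta> powr (2-p)) / (p-2)"
  define X2 where "X2 = ((s - \<alpha>) powr (1-mu) - (s - \<beta>) powr (1-mu)) / (1-mu)"
  have PsiE: "Lop_slice_bound p q mu t r s = 2 powr a * s powr (-a) * X1 + s powr (1 - bt) * X2"
    unfolding Lop_slice_bound_def X1_def X2_def \<alpha>_def \<beta>_def a_def bt_def using True by simp
  have X1nn: "0 \<le> X1"
  proof -
    have "\<beta> powr (2-p) \<le> \<alpha> powr (2-p)" using ab \<alpha>0 f unfolding \<alpha>_def \<beta>_def by (intro powr_mono2') auto
    then show ?thesis unfolding X1_def using f by simp
  qed
  have X1le: "X1 \<le> (1/(p-2)) * \<alpha> powr (2-p)" unfolding X1_def using f by (simp add: divide_right_mono)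
  have X2le: "X2 \<le> T powr (1-mu) / (1-mu)"
  proof -
    have "X2 \<le> (s - \<alpha>) powr (1-mu) / (1-mu)" unfolding X2_def using f by (intro divide_right_mono) auto
    also have "\<dots> \<le> T powr (1-mu) / (1-mu)"
      using ab f unfolding \<alpha>_def T_def by (intro divide_right_mono powr_mono2) auto
    finally show ?thesis .
  qed
  define w1 where "w1 = (if 0 \<le> s \<and> s \<le> m then (1/(p-2)) * \<bar>s-(t-r)\<bar> powr (2-p) else 0)"
  define w2 where "w2 = (if m \<le> s \<and> s \<le> t then s powr (2-p-a) else 0)"
  define w3 where "w3 = (if (t-r)/2 \<le> s \<and> s \<le> t then s powr (1-bt) else 0)"
  have wnn: "0 \<le> w1" "0 \<le> w2" "0 \<le> w3" unfolding w1_def w2_def w3_def using f by auto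
  have partI: "2 powr a * s powr (-a) * X1 \<le> 4 powr a * T powr (-a) * w1 + (2 powr a * 2 powr (p-2) / (p-2)) * w2"
  proof (cases "s \<le> m")
    case True
    have c1: "2 powr a * s powr (-a) \<le> 4 powr a * T powr (-a)"
    proof -
      have "2 powr a * s powr (-a) \<le> 2 powr a * (2 powr a * T powr (-a))"
        using powr_neg_le_of_half_le[of T s a] sT2 a0 by (intro mult_left_mono) auto
      also have "\<dots> = 4 powr a * T powr (-a)" by (simp add: mult.assoc[symmetric] powr_mult[symmetric])
      finally show ?thesis .
    qed
    have "2 powr a * s powr (-a) * X1 \<le> 4 powr a * T powr (-a) * ((1/(p-2)) * \<alpha> powr (2-p))"
      by (rule mult_mono[OF c1 X1le]) (use X1nn in auto)
    also have "\<dots> = 4 powr a * T powr (-a) * w1" unfolding w1_def \<alpha>_def using True s by simp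
    moreover have "0 \<le> (2 powr a * 2 powr (p-2) / (p-2)) * w2" using f wnn by simp
    ultimately show ?thesis by linarith
  next
    case False
    have m2: "m = 2*T" "2*T < s" using False s unfolding m_def T_def by auto
    have sgt: "T < s" "2 * T < s" using m2 sT2 by linarith+
    have \<alpha>s1: "\<alpha> = s - T" using sgt unfolding \<alpha>_def T_def by simp
    have \<alpha>s: "\<alpha> = s - T" "s/2 \<le> \<alpha>" using \<alpha>s1 sgt by auto
    have "\<alpha> powr (2-p) \<le> (s/2) powr (2-p)" using \<alpha>s s0 f by (intro powr_mono2') auto
    also have "(s/2) powr (2-p) = 2 powr (p-2) * s powr (2-p)" using half_powr_neg[of s "p-2"] s0 by simp
    finally have al: "\<alpha> powr (2-p) \<le> 2 powr (p-2) * s powr (2-p)" .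
    have "2 powr a * s powr (-a) * X1 \<le> 2 powr a * s powr (-a) * ((1/(p-2)) * (2 powr (p-2) * s powr (2-p)))"
      using X1le al f by (intro mult_left_mono order.trans[OF X1le]) auto
    also have "\<dots> = (2 powr a * 2 powr (p-2) / (p-2)) * (s powr (-a) * s powr (2-p))" by simp
    also have "s powr (-a) * s powr (2-p) = s powr (2-p-a)" using s0 by (simp add: powr_add[symmetric])
    also have "(2 powr a * 2 powr (p-2) / (p-2)) * s powr (2-p-a) = (2 powr a * 2 powr (p-2) / (p-2)) * w2"
      unfolding w2_def using m2 s by simp
    moreover have "0 \<le> 4 powr a * T powr (-a) * w1" using wnn by simp
    ultimately show ?thesis by linarith
  qed
  have partII: "s powr (1 - bt) * X2 \<le> (T powr (1-mu) / (1-mu)) * w3"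
  proof -
    have "s powr (1 - bt) * X2 \<le> s powr (1 - bt) * (T powr (1-mu) / (1-mu))" using X2le by (intro mult_left_mono) auto
    also have "\<dots> = (T powr (1-mu) / (1-mu)) * w3" unfolding w3_def using sT2 s unfolding T_def by simp
    finally show ?thesis .
  qed
  have "Lop_slice_bound p q mu t r s \<le> 4 powr a * T powr (-a) * w1 + (2 powr a * 2 powr (p-2) / (p-2)) * w2 + (T powr (1-mu) / (1-mu)) * w3"
    unfolding PsiE using partI partII by linarith
  also have "\<dots> = Lop_majorant_cone p q mu t r s" unfolding Lop_majorant_cone_def w1_def w2_def w3_def a_def bt_def m_def T_def by simp
  finally show ?thesis .
qed

definition Lop_envelope_cone :: "real \<Rightarrow> real \<Rightarrow> real \<Rightarrow> real \<Rightarrow> real \<Rightarrow> real" where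
  "Lop_envelope_cone p q mu t r =
    4 powr (mu+p*q-2*p) * (t-r) powr (-(mu+p*q-2*p)) * (2 * (t-r) powr (3-p) / ((3-p)*(p-2)))
  + (2 powr (mu+p*q-2*p) * 2 powr (p-2) / (p-2)) * ((t-r) powr (3-p-(mu+p*q-2*p)) / ((mu+p*q-2*p)+p-3))
  + ((t-r) powr (1-mu) / (1-mu)) * (2 powr (p*(q-1)-2) * (t-r) powr (2-p*(q-1)) / (p*(q-1)-2))"

lemma Lop_majorant_cone_integral:
  assumes pr: "exponent_conditions p q mu" and r: "0 < r" and T: "1 \<le> t - r" and rT: "t - r \<le> r"
  shows "\<exists>V. (Lop_majorant_cone p q mu t r has_integral V) {0..t} \<and> V \<le> Lop_envelope_cone p q mu t r"
proof -
  note f = exponent_conditionsD[OF pr]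
  define T where "T = t - r"
  define a where "a = mu+p*q-2*p"
  define bt where "bt = p*(q-1)"
  define m where "m = min (2*(t-r)) t"
  have mpq: "0 < mu/(p*q)" using f by simp
  have a0: "3 - p < a" using f mpq unfolding a_def by linarith
  have bt2: "2 < bt" using f unfolding bt_def by (simp add: algebra_simps)
  have m': "m = min (2*T) t" unfolding m_def T_def ..
  have TT: "1 \<le> T" "T \<le> m" "m \<le> t" "m - T \<le> T" "0 \<le> m - T" using T r unfolding T_def m_def by auto
  have i1a: "((\<lambda>s. \<bar>s - T\<bar> powr (2-p)) has_integral ((T-0) powr (2-p+1) + (m-T) powr (2-p+1))/(2-p+1)) {0..m}"
    by (rule has_integral_abs_diff_powr) (use TT f in auto)
  have i1: "((\<lambda>s. if 0 \<le> s \<and> s \<le> m then (1/(p-2)) * \<bar>s-(t-r)\<bar> powr (2-p) else 0) has_integral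
      (1/(p-2)) * ((T powr (3-p) + (m-T) powr (3-p))/(3-p))) {0..t}"
  proof -
    have "((\<lambda>s. (1/(p-2)) * \<bar>s-(t-r)\<bar> powr (2-p)) has_integral (1/(p-2)) * ((T powr (3-p) + (m-T) powr (3-p))/(3-p))) {0..m}"
      using has_integral_mult_right[OF i1a, of "1/(p-2)"] by (simp add: T_def)
    note W = this
    show ?thesis by (rule has_integral_restrict_subinterval[OF _ _ _ W]) (use TT in auto)
  qed
  have v1: "(1/(p-2)) * ((T powr (3-p) + (m-T) powr (3-p))/(3-p)) \<le> 2 * T powr (3-p) / ((3-p)*(p-2))"
  proof -
    have "(m-T) powr (3-p) \<le> T powr (3-p)" using TT f by (intro powr_mono2) auto
    then have "(T powr (3-p) + (m-T) powr (3-p))/(3-p) \<le> (2 * T powr (3-p))/(3-p)" using f by (intro divide_right_mono) auto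
    then have "(1/(p-2)) * ((T powr (3-p) + (m-T) powr (3-p))/(3-p)) \<le> (1/(p-2)) * ((2 * T powr (3-p))/(3-p))"
      using f by (intro mult_left_mono) auto
    then show ?thesis by (simp add: mult_ac)
  qed
  have i2a: "((\<lambda>s. (1 * s + 0) powr (2-p-a)) has_integral ((1*t+0) powr (2-p-a+1) - (1*m+0) powr (2-p-a+1)) / (1*(2-p-a+1))) {m..t}"
    by (rule has_integral_affine_powr) (use TT a0 in auto)
  have i2: "((\<lambda>s. if m \<le> s \<and> s \<le> t then s powr (2-p-a) else 0) has_integral
      (t powr (3-p-a) - m powr (3-p-a)) / (3-p-a)) {0..t}"
  proof -
    have "((\<lambda>s. s powr (2-p-a)) has_integral (t powr (3-p-a) - m powr (3-p-a)) / (3-p-a)) {m..t}"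
      using i2a by (simp add: algebra_simps)
    note W = this
    show ?thesis by (rule has_integral_restrict_subinterval[OF _ _ _ W]) (use TT in auto)
  qed
  have v2: "(t powr (3-p-a) - m powr (3-p-a)) / (3-p-a) \<le> T powr (3-p-a) / (a+p-3)"
  proof -
    have "(t powr (3-p-a) - m powr (3-p-a)) / (3-p-a) = (m powr (3-p-a) - t powr (3-p-a)) / (a+p-3)"
      using a0 by (simp add: field_simps)
    also have "\<dots> \<le> m powr (3-p-a) / (a+p-3)" using a0 by (intro divide_right_mono) auto
    also have "\<dots> \<le> T powr (3-p-a) / (a+p-3)" using a0 TT by (intro divide_right_mono powr_mono2') auto
    finally show ?thesis .
  qed
  have i3a: "((\<lambda>s. (1 * s + 0) powr (1-bt)) has_integral ((1*t+0) powr (1-bt+1) - (1*(T/2)+0) powr (1-bt+1)) / (1*(1-bt+1))) {T/2..t}"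
    by (rule has_integral_affine_powr) (use TT bt2 in auto)
  have i3: "((\<lambda>s. if (t-r)/2 \<le> s \<and> s \<le> t then s powr (1-bt) else 0) has_integral
      (t powr (2-bt) - (T/2) powr (2-bt)) / (2-bt)) {0..t}"
  proof -
    have "((\<lambda>s. s powr (1-bt)) has_integral (t powr (2-bt) - (T/2) powr (2-bt)) / (2-bt)) {T/2..t}"
      using i3a by (simp add: algebra_simps)
    note W = this
    show ?thesis unfolding T_def[symmetric] by (rule has_integral_restrict_subinterval[OF _ _ _ W]) (use TT in auto)
  qed
  have v3: "(t powr (2-bt) - (T/2) powr (2-bt)) / (2-bt) \<le> 2 powr (bt-2) * T powr (2-bt) / (bt-2)"
  proof -
    have "(t powr (2-bt) - (T/2) powr (2-bt)) / (2-bt) = ((T/2) powr (2-bt) - t powr (2-bt)) / (bt-2)"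
      using bt2 by (simp add: field_simps)
    also have "\<dots> \<le> (T/2) powr (2-bt) / (bt-2)" using bt2 by (intro divide_right_mono) auto
    finally have v: "(t powr (2-bt) - (T/2) powr (2-bt)) / (2-bt) \<le> (T/2) powr (2-bt) / (bt-2)" .
    have "(T/2) powr (2-bt) = 2 powr (bt-2) * T powr (2-bt)" using half_powr_neg[of T "bt-2"] TT by simp
    then show ?thesis using v by simp
  qed
  define c1 where "c1 = 4 powr a * T powr (-a)"
  define c2 where "c2 = 2 powr a * 2 powr (p-2) / (p-2)"
  define c3 where "c3 = T powr (1-mu) / (1-mu)"
  have cnn: "0 \<le> c1" "0 \<le> c2" "0 \<le> c3" unfolding c1_def c2_def c3_def using f by auto
  have all: "((\<lambda>s. Lop_majorant_cone p q mu t r s) has_integral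
      c1 * ((1/(p-2)) * ((T powr (3-p) + (m-T) powr (3-p))/(3-p)))
    + c2 * ((t powr (3-p-a) - m powr (3-p-a)) / (3-p-a))
    + c3 * ((t powr (2-bt) - (T/2) powr (2-bt)) / (2-bt))) {0..t}"
    unfolding Lop_majorant_cone_def c1_def c2_def c3_def a_def[symmetric] bt_def[symmetric] T_def[symmetric]
    unfolding m'[symmetric]
    by (intro has_integral_add has_integral_mult_right i1[unfolded T_def[symmetric]] i2 i3[unfolded T_def[symmetric]])
  have le: "c1 * ((1/(p-2)) * ((T powr (3-p) + (m-T) powr (3-p))/(3-p)))
    + c2 * ((t powr (3-p-a) - m powr (3-p-a)) / (3-p-a))
    + c3 * ((t powr (2-bt) - (T/2) powr (2-bt)) / (2-bt)) \<le> Lop_envelope_cone p q mu t r"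
  proof -
    have "c1 * ((1/(p-2)) * ((T powr (3-p) + (m-T) powr (3-p))/(3-p))) \<le> c1 * (2 * T powr (3-p) / ((3-p)*(p-2)))"
      using v1 cnn by (intro mult_left_mono) auto
    moreover have "c2 * ((t powr (3-p-a) - m powr (3-p-a)) / (3-p-a)) \<le> c2 * (T powr (3-p-a) / (a+p-3))"
      using v2 cnn by (intro mult_left_mono) auto
    moreover have "c3 * ((t powr (2-bt) - (T/2) powr (2-bt)) / (2-bt)) \<le> c3 * (2 powr (bt-2) * T powr (2-bt) / (bt-2))"
      using v3 cnn by (intro mult_left_mono) auto
    moreover have "Lop_envelope_cone p q mu t r = c1 * (2 * T powr (3-p) / ((3-p)*(p-2))) + c2 * (T powr (3-p-a) / (a+p-3))
        + c3 * (2 powr (bt-2) * T powr (2-bt) / (bt-2))"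
      unfolding Lop_envelope_cone_def c1_def c2_def c3_def a_def bt_def T_def by simp
    ultimately show ?thesis by linarith
  qed
  show ?thesis using all le by blast
qed

lemma Lop_envelope_weight_interior:
  fixes T r S W a b bt mu p :: real
  assumes T: "1 \<le> T" "0 < r" "r \<le> T" "T \<le> S" "S \<le> 3*T"
    and par: "0 < b" "b \<le> a" "p - mu - bt + b \<le> 0" "2 < p" "p < 3" "0 < mu" "mu < 1" "2 < bt"
    and W: "0 \<le> W" "W \<le> 2 powr b * S powr b * (r powr (p-2) / (2*r))"
  shows "W * (4 powr a * T powr (-a) * (2 * r powr (3-p) / (p-2) + 2 * r powr (3-p) / ((3-p)*(p-2)))
     + 2 powr (bt-1) * T powr (1-bt) * (2 powr (1-mu) * r powr (2-mu) / (1-mu) + r * T powr (1-mu) / (1-mu)))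
   \<le> 2 powr b / 2 * 3 powr b * (4 powr a * (2/(p-2) + 2/((3-p)*(p-2))) + 2 powr (bt-1) * (2 powr (1-mu)/(1-mu) + 1/(1-mu)))"
proof -
  have T0: "0 < T" "0 < S" using T by auto
  define Z where "Z = r powr (p-2) / r"
  have Z: "Z = r powr (p-3)"
  proof -
    have "r powr (p-2) = r powr (p-3) * r powr 1" by (simp only: powr_add[symmetric]) simp
    then show ?thesis unfolding Z_def using T by simp
  qed
  have Z0: "0 \<le> Z" unfolding Z by simp
  have Sb: "S powr b \<le> 3 powr b * T powr b"
  proof -
    have "S powr b \<le> (3*T) powr b" using T par by (intro powr_mono2) auto
    then show ?thesis by (simp add: powr_mult)
  qed
  define E where "E = 4 powr a * T powr (-a) * (2 * r powr (3-p) / (p-2) + 2 * r powr (3-p) / ((3-p)*(p-2)))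
     + 2 powr (bt-1) * T powr (1-bt) * (2 powr (1-mu) * r powr (2-mu) / (1-mu) + r * T powr (1-mu) / (1-mu))"
  have Enn: "0 \<le> E" unfolding E_def using par T by (intro add_nonneg_nonneg mult_nonneg_nonneg) auto
  define k1 where "k1 = 4 powr a * (2/(p-2) + 2/((3-p)*(p-2)))"
  define k2 where "k2 = 2 powr (bt-1) * (2 powr (1-mu)/(1-mu))"
  define k3 where "k3 = 2 powr (bt-1) * (1/(1-mu))"
  have kn: "0 \<le> k1" "0 \<le> k2" "0 \<le> k3" unfolding k1_def k2_def k3_def using par by auto
  have Eeq: "S powr b * Z * E = k1 * (S powr b * T powr (-a) * (Z * r powr (3-p)))
      + k2 * (S powr b * T powr (1-bt) * (Z * r powr (2-mu)))
      + k3 * (S powr b * T powr (1-bt) * T powr (1-mu) * (Z * r))"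
    unfolding E_def k1_def k2_def k3_def by (simp add: field_simps)
  have z1: "Z * r powr (3-p) = 1" unfolding Z using T by (simp add: powr_add[symmetric])
  have z2: "Z * r powr (2-mu) \<le> T powr (p-1-mu)"
  proof -
    have "Z * r powr (2-mu) = r powr (p-1-mu)" unfolding Z using T by (simp add: powr_add[symmetric] algebra_simps)
    also have "\<dots> \<le> T powr (p-1-mu)" using T par by (intro powr_mono2) auto
    finally show ?thesis .
  qed
  have z3: "Z * r \<le> T powr (p-2)"
  proof -
    have "Z * r = r powr (p-2)" unfolding Z_def using T by simp
    also have "\<dots> \<le> T powr (p-2)" using T par by (intro powr_mono2) auto
    finally show ?thesis .
  qed
  have t1: "S powr b * T powr (-a) * (Z * r powr (3-p)) \<le> 3 powr b"
  proof -
    have "S powr b * T powr (-a) \<le> 3 powr b * T powr b * T powr (-a)" using Sb by (intro mult_right_mono) auto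
    also have "\<dots> = 3 powr b * T powr (b - a)" using T0 by (simp add: powr_add[symmetric] mult.assoc add.assoc)
    also have "\<dots> \<le> 3 powr b * 1" using powr_le_1_of_nonpos[of T "b-a"] T par by (intro mult_left_mono) auto
    finally show ?thesis using z1 by simp
  qed
  have t2: "S powr b * T powr (1-bt) * (Z * r powr (2-mu)) \<le> 3 powr b"
  proof -
    have "S powr b * T powr (1-bt) * (Z * r powr (2-mu)) \<le> (3 powr b * T powr b) * T powr (1-bt) * T powr (p-1-mu)"
      using Sb z2 Z0 by (intro mult_mono) auto
    also have "\<dots> = 3 powr b * T powr (b + (1-bt) + (p-1-mu))" using T0 by (simp add: powr_add[symmetric] mult.assoc add.assoc)
    also have "\<dots> \<le> 3 powr b * 1" using powr_le_1_of_nonpos[of T "b + (1-bt) + (p-1-mu)"] T par by (intro mult_left_mono) auto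
    finally show ?thesis by simp
  qed
  have t3: "S powr b * T powr (1-bt) * T powr (1-mu) * (Z * r) \<le> 3 powr b"
  proof -
    have "S powr b * T powr (1-bt) * T powr (1-mu) * (Z * r) \<le> (3 powr b * T powr b) * T powr (1-bt) * T powr (1-mu) * T powr (p-2)"
      using Sb z3 Z0 T by (intro mult_mono) auto
    also have "\<dots> = 3 powr b * T powr (b + (1-bt) + (1-mu) + (p-2))" using T0 by (simp add: powr_add[symmetric] mult.assoc add.assoc)
    also have "\<dots> \<le> 3 powr b * 1" using powr_le_1_of_nonpos[of T "b + (1-bt) + (1-mu) + (p-2)"] T par by (intro mult_left_mono) auto
    finally show ?thesis by simp
  qed
  have "S powr b * Z * E \<le> k1 * 3 powr b + k2 * 3 powr b + k3 * 3 powr b"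
    unfolding Eeq using t1 t2 t3 kn by (intro add_mono mult_left_mono) auto
  have WE: "W * E \<le> 2 powr b / 2 * (S powr b * Z * E)"
  proof -
    have "W * E \<le> (2 powr b * S powr b * (r powr (p-2) / (2*r))) * E" using W Enn by (intro mult_right_mono) auto
    also have "\<dots> = 2 powr b / 2 * (S powr b * Z * E)" unfolding Z_def by (simp add: field_simps)
    finally show ?thesis .
  qed
  also have "\<dots> \<le> 2 powr b / 2 * (k1 * 3 powr b + k2 * 3 powr b + k3 * 3 powr b)"
    using \<open>S powr b * Z * E \<le> k1 * 3 powr b + k2 * 3 powr b + k3 * 3 powr b\<close> by (intro mult_left_mono) auto
  also have "\<dots> = 2 powr b / 2 * 3 powr b * (4 powr a * (2/(p-2) + 2/((3-p)*(p-2))) + 2 powr (bt-1) * (2 powr (1-mu)/(1-mu) + 1/(1-mu)))"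
    unfolding k1_def k2_def k3_def by (simp add: algebra_simps)
  finally show ?thesis unfolding E_def .
qed

lemma Lop_envelope_weight_cone:
  fixes T W a bt mu p e :: real
  assumes T: "1 \<le> T"
    and par: "e - a + 3 - p \<le> 0" "e + 1 - mu + 2 - bt \<le> 0" "2 < p" "p < 3" "0 < mu" "mu < 1" "2 < bt" "3 - p < a"
    and W: "0 \<le> W" "W \<le> 3 * 2 powr e * T powr e"
  shows "W * (4 powr a * T powr (-a) * (2 * T powr (3-p) / ((3-p)*(p-2)))
     + (2 powr a * 2 powr (p-2) / (p-2)) * (T powr (3-p-a) / (a+p-3))
     + (T powr (1-mu) / (1-mu)) * (2 powr (bt-2) * T powr (2-bt) / (bt-2)))
   \<le> 3 * 2 powr e * (4 powr a * 2 / ((3-p)*(p-2)) + 2 powr a * 2 powr (p-2) / ((p-2)*(a+p-3))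
       + 2 powr (bt-2) / ((1-mu)*(bt-2)))"
proof -
  have T0: "0 < T" using T by auto
  define k1 where "k1 = 4 powr a * 2 / ((3-p)*(p-2))"
  define k2 where "k2 = 2 powr a * 2 powr (p-2) / ((p-2)*(a+p-3))"
  define k3 where "k3 = 2 powr (bt-2) / ((1-mu)*(bt-2))"
  have kn: "0 \<le> k1" "0 \<le> k2" "0 \<le> k3" unfolding k1_def k2_def k3_def using par by auto
  define E where "E = 4 powr a * T powr (-a) * (2 * T powr (3-p) / ((3-p)*(p-2)))
     + (2 powr a * 2 powr (p-2) / (p-2)) * (T powr (3-p-a) / (a+p-3))
     + (T powr (1-mu) / (1-mu)) * (2 powr (bt-2) * T powr (2-bt) / (bt-2))"
  have Enn: "0 \<le> E" unfolding E_def using par by (intro add_nonneg_nonneg mult_nonneg_nonneg) auto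
  have Eeq: "T powr e * E = k1 * (T powr e * T powr (-a) * T powr (3-p)) + k2 * (T powr e * T powr (3-p-a))
      + k3 * (T powr e * T powr (1-mu) * T powr (2-bt))"
    unfolding E_def k1_def k2_def k3_def by (simp add: field_simps)
  have t1: "T powr e * T powr (-a) * T powr (3-p) \<le> 1"
  proof -
    have "T powr e * T powr (-a) * T powr (3-p) = T powr (e - a + 3 - p)" using T0 by (simp add: powr_add[symmetric] mult.assoc algebra_simps)
    also have "\<dots> \<le> 1" using powr_le_1_of_nonpos T par by auto
    finally show ?thesis .
  qed
  have t2: "T powr e * T powr (3-p-a) \<le> 1"
  proof -
    have "T powr e * T powr (3-p-a) = T powr (e - a + 3 - p)" using T0 by (simp add: powr_add[symmetric] algebra_simps)
    also have "\<dots> \<le> 1" using powr_le_1_of_nonpos T par by auto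
    finally show ?thesis .
  qed
  have t3: "T powr e * T powr (1-mu) * T powr (2-bt) \<le> 1"
  proof -
    have "T powr e * T powr (1-mu) * T powr (2-bt) = T powr (e + 1 - mu + 2 - bt)" using T0 by (simp add: powr_add[symmetric] mult.assoc algebra_simps)
    also have "\<dots> \<le> 1" using powr_le_1_of_nonpos T par by auto
    finally show ?thesis .
  qed
  have TE: "T powr e * E \<le> k1 + k2 + k3"
    unfolding Eeq using mult_left_mono[OF t1 kn(1)] mult_left_mono[OF t2 kn(2)] mult_left_mono[OF t3 kn(3)] by simp
  have "W * E \<le> (3 * 2 powr e * T powr e) * E" using W Enn by (intro mult_right_mono) auto
  also have "\<dots> = 3 * 2 powr e * (T powr e * E)" by simp
  also have "\<dots> \<le> 3 * 2 powr e * (k1 + k2 + k3)" using TE by (intro mult_left_mono) auto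
  finally show ?thesis unfolding E_def k1_def k2_def k3_def .
qed

lemma omega2t_Lop_envelope_interior:
  assumes pr: "exponent_conditions p q mu"
  obtains C where "0 \<le> C"
    and "\<And>t r. 0 < r \<Longrightarrow> 1 \<le> t - r \<Longrightarrow> r < t - r \<Longrightarrow>
           omega2t p q mu t r / (2*r) * Lop_envelope_interior p q mu t r \<le> C"
proof -
  note f = exponent_conditionsD[OF pr]
  define a where "a = mu+p*q-2*p"
  define b where "b = 3-p+mu/(p*q)"
  define bt where "bt = p*(q-1)"
  have bt_eq: "bt = p*q - p" unfolding bt_def by (simp add: algebra_simps)
  have par: "0 < b" "b \<le> a" "2 < bt" "p - mu - bt + b \<le> 0"
    using f(7,8,9,10) unfolding a_def b_def bt_eq by linarith+
  define C where "C = 2 powr b / 2 * 3 powr b * (4 powr a * (2/(p-2) + 2/((3-p)*(p-2)))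
    + 2 powr (bt-1) * (2 powr (1-mu)/(1-mu) + 1/(1-mu)))"
  show thesis
  proof (rule that)
    show "0 \<le> C" unfolding C_def using f by (intro mult_nonneg_nonneg add_nonneg_nonneg) auto
    fix t r :: real assume r0: "0 < r" and T: "1 \<le> t - r" and interior: "r < t - r"
    have om: "omega2t p q mu t r = r powr (p-2) * jb (t+r) powr b"
      unfolding omega2t_def b_def using interior by simp
    have "jb (t+r) powr b \<le> 2 powr b * (t+r) powr b"
      using jb_powr_le_twice[of "t+r" b] par T r0 by simp
    then have "r powr (p-2) * jb (t+r) powr b / (2*r) \<le> r powr (p-2) * (2 powr b * (t+r) powr b) / (2*r)"
      using r0 by (intro divide_right_mono mult_left_mono) auto
    then have W: "omega2t p q mu t r / (2*r) \<le> 2 powr b * (t+r) powr b * (r powr (p-2) / (2*r))"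
      unfolding om by (simp add: mult_ac)
    have W0: "0 \<le> omega2t p q mu t r / (2*r)"
      by (intro divide_nonneg_pos less_imp_le[OF omega2t_pos]) (use r0 in auto)
    show "omega2t p q mu t r / (2*r) * Lop_envelope_interior p q mu t r \<le> C"
      unfolding Lop_envelope_interior_def C_def a_def bt_def
      by (rule Lop_envelope_weight_interior)
        (use W W0 par f interior T r0 in \<open>auto simp: a_def bt_def\<close>)
  qed
qed

lemma omega2t_Lop_envelope_cone:
  assumes pr: "exponent_conditions p q mu"
  obtains C where "0 \<le> C"
    and "\<And>t r. 0 < r \<Longrightarrow> 1 \<le> t - r \<Longrightarrow> t - r \<le> r \<Longrightarrow>
           omega2t p q mu t r / (2*r) * Lop_envelope_cone p q mu t r \<le> C"
proof -
  note f = exponent_conditionsD[OF pr]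
  define a where "a = mu+p*q-2*p"
  define bt where "bt = p*(q-1)"
  define e where "e = mu/(p*q)"
  have mpq: "0 < e" unfolding e_def using f by simp
  have bt_eq: "bt = p*q - p" unfolding bt_def by (simp add: algebra_simps)
  have par: "2 < bt" "3 - p < a" "e - a + 3 - p \<le> 0" "e + 1 - mu + 2 - bt \<le> 0"
    using f(7,8,9,10) mpq unfolding a_def bt_eq e_def by linarith+
  define C where "C = 3 * 2 powr e * (4 powr a * 2 / ((3-p)*(p-2))
    + 2 powr a * 2 powr (p-2) / ((p-2)*(a+p-3)) + 2 powr (bt-2) / ((1-mu)*(bt-2)))"
  show thesis
  proof (rule that)
    show "0 \<le> C" unfolding C_def using f par by (intro mult_nonneg_nonneg add_nonneg_nonneg) auto
    fix t r :: real assume r0: "0 < r" and T: "1 \<le> t - r" and cone: "t - r \<le> r"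
    have a1: "jb (t-r) powr e \<le> 2 powr e * (t-r) powr e"
      using jb_powr_le_twice[of "t-r" e] mpq T by simp
    have a2: "jb (t+r) / (2*r) \<le> 3"
      using jb_le_twice_abs[of "t+r"] T cone r0 by (simp add: divide_simps)
    have "omega2t p q mu t r / (2*r) = jb (t-r) powr e * (jb (t+r) / (2*r))"
      unfolding omega2t_def e_def using cone by simp
    also have "\<dots> \<le> (2 powr e * (t-r) powr e) * 3"
      by (rule mult_mono[OF a1 a2]) (use jb_pos r0 in \<open>auto intro: less_imp_le\<close>)
    finally have W: "omega2t p q mu t r / (2*r) \<le> 3 * 2 powr e * (t-r) powr e" by (simp add: mult_ac)
    have W0: "0 \<le> omega2t p q mu t r / (2*r)"
      by (intro divide_nonneg_pos less_imp_le[OF omega2t_pos]) (use r0 in auto)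
    show "omega2t p q mu t r / (2*r) * Lop_envelope_cone p q mu t r \<le> C"
      unfolding Lop_envelope_cone_def C_def a_def bt_def
      by (rule Lop_envelope_weight_cone) (use W W0 par f T in \<open>auto simp: a_def bt_def\<close>)
  qed
qed

lemma Lop_eq_0_off_cone:
  assumes bound: "\<And>s \<rho>. \<rho> \<noteq> 0 \<Longrightarrow> \<bar>F s \<rho>\<bar> \<le> K * cone_weight \<omega> p s \<bar>\<rho>\<bar>"
    and T: "t - r < 1"
  shows "Lop F t r = 0"
proof -
  have "\<rho> * F s \<rho> = 0" if "\<rho> \<in> {r-t+s..r+t-s}" for s \<rho>
  proof (cases "\<rho> = 0")
    case False
    have "cone_weight \<omega> p s \<bar>\<rho>\<bar> = 0" unfolding cone_weight_def using that T by auto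
    then show ?thesis using bound[of \<rho> s] False by simp
  qed simp
  then have "integral {r-t+s..r+t-s} (\<lambda>\<rho>. \<rho> * F s \<rho>) = 0" for s
    using integral_cong[of "{r-t+s..r+t-s}" "\<lambda>\<rho>. \<rho> * F s \<rho>" "\<lambda>_. 0"] by simp
  then show ?thesis unfolding Lop_def by simp
qed

lemma abs_Lop_le_majorant_integral:
  assumes pr: "exponent_conditions p q mu" and K: "0 \<le> K"
    and bound: "\<And>s \<rho>. \<rho> \<noteq> 0 \<Longrightarrow> \<bar>F s \<rho>\<bar> \<le> K * cone_weight (omega1t p q mu) p s \<bar>\<rho>\<bar>"
    and cont: "\<And>s. 2 \<le> s \<Longrightarrow> continuous_on UNIV (F s)" and even: "\<And>s \<rho>. F s (-\<rho>) = F s \<rho>"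
    and r: "0 < r"
    and \<psi>: "(\<psi> has_integral V) {0..t}" "\<And>s. 0 \<le> \<psi> s"
    and majorant: "\<And>s. s \<in> {0..t} - {t-r} \<Longrightarrow> Lop_slice_bound p q mu t r s \<le> \<psi> s"
  shows "\<bar>Lop F t r\<bar> \<le> K * V / (2*r)"
proof -
  have Fb: "\<forall>s \<rho>. \<rho> \<noteq> 0 \<longrightarrow> \<bar>F s \<rho>\<bar> \<le> K * cone_weight (omega1t p q mu) p s \<bar>\<rho>\<bar>"
    using bound by blast
  define I where "I s = integral {r-t+s..r+t-s} (\<lambda>\<rho>. \<rho> * F s \<rho>)" for s
  have "\<bar>I s\<bar> \<le> K * \<psi> s" if s: "s \<in> {0..t} - {t-r}" for s
  proof (cases "s < 2")
    case True
    then show ?thesis using integral_slice_before_2[OF Fb] K \<psi>(2) unfolding I_def by simp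
  next
    case False
    have "\<bar>I s\<bar> \<le> K * Lop_slice_bound p q mu t r s"
      unfolding I_def by (rule abs_Lop_slice_le[OF pr K Fb]) (use cont even s False r in auto)
    also have "\<dots> \<le> K * \<psi> s" using majorant[OF s] K by (intro mult_left_mono)
    finally show ?thesis .
  qed
  moreover have "0 \<le> V" using has_integral_nonneg[OF \<psi>(1)] \<psi>(2) by auto
  ultimately have "\<bar>integral {0..t} I\<bar> \<le> K * V"
    by (intro abs_integral_le_has_integral[OF has_integral_mult_right[OF \<psi>(1)], of "{t-r}"])
      (use K in auto)
  then show ?thesis unfolding Lop_def I_def[symmetric] using r by (simp add: abs_mult divide_right_mono)
qed

lemma abs_Lop_le_envelope_interior:
  assumes pr: "exponent_conditions p q mu" and K: "0 \<le> K"
    and bound: "\<And>s \<rho>. \<rho> \<noteq> 0 \<Longrightarrow> \<bar>F s \<rho>\<bar> \<le> K * cone_weight (omega1t p q mu) p s \<bar>\<rho>\<bar>"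
    and cont: "\<And>s. 2 \<le> s \<Longrightarrow> continuous_on UNIV (F s)" and even: "\<And>s \<rho>. F s (-\<rho>) = F s \<rho>"
    and r: "0 < r" "1 \<le> t - r" "r < t - r"
  shows "\<bar>Lop F t r\<bar> \<le> K * Lop_envelope_interior p q mu t r / (2*r)"
proof -
  obtain V where V: "(Lop_majorant_interior p q mu t r has_integral V) {0..t}"
      "V \<le> Lop_envelope_interior p q mu t r"
    using Lop_majorant_interior_integral[OF pr r] by blast
  have "\<bar>Lop F t r\<bar> \<le> K * V / (2*r)"
    by (rule abs_Lop_le_majorant_integral[OF pr K _ _ _ _ V(1)])
      (use bound cont even r Lop_majorant_interior_nonneg[OF pr] Lop_slice_bound_le_interior[OF pr r] in auto)
  also have "\<dots> \<le> K * Lop_envelope_interior p q mu t r / (2*r)"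
    using V(2) K r by (intro divide_right_mono mult_left_mono) auto
  finally show ?thesis .
qed

lemma abs_Lop_le_envelope_cone:
  assumes pr: "exponent_conditions p q mu" and K: "0 \<le> K"
    and bound: "\<And>s \<rho>. \<rho> \<noteq> 0 \<Longrightarrow> \<bar>F s \<rho>\<bar> \<le> K * cone_weight (omega1t p q mu) p s \<bar>\<rho>\<bar>"
    and cont: "\<And>s. 2 \<le> s \<Longrightarrow> continuous_on UNIV (F s)" and even: "\<And>s \<rho>. F s (-\<rho>) = F s \<rho>"
    and r: "0 < r" "1 \<le> t - r" "t - r \<le> r"
  shows "\<bar>Lop F t r\<bar> \<le> K * Lop_envelope_cone p q mu t r / (2*r)"
proof -
  obtain V where V: "(Lop_majorant_cone p q mu t r has_integral V) {0..t}"
      "V \<le> Lop_envelope_cone p q mu t r"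
    using Lop_majorant_cone_integral[OF pr r] by blast
  have "\<bar>Lop F t r\<bar> \<le> K * V / (2*r)"
    by (rule abs_Lop_le_majorant_integral[OF pr K _ _ _ _ V(1)])
      (use bound cont even r Lop_majorant_cone_nonneg[OF pr] Lop_slice_bound_le_cone[OF pr r] in auto)
  also have "\<dots> \<le> K * Lop_envelope_cone p q mu t r / (2*r)"
    using V(2) K r by (intro divide_right_mono mult_left_mono) auto
  finally show ?thesis .
qed

lemma Lop_weighted_bound:
  assumes pr: "exponent_conditions p q mu"
  obtains C where "0 < C"
    and "\<And>F K t r. 0 \<le> K \<Longrightarrow>
      (\<And>s \<rho>. \<rho> \<noteq> 0 \<Longrightarrow> \<bar>F s \<rho>\<bar> \<le> K * cone_weight (omega1t p q mu) p s \<bar>\<rho>\<bar>) \<Longrightarrow>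
      (\<And>s. 2 \<le> s \<Longrightarrow> continuous_on UNIV (F s)) \<Longrightarrow> (\<And>s \<rho>. F s (-\<rho>) = F s \<rho>) \<Longrightarrow>
      0 \<le> r \<Longrightarrow> \<bar>omega2t p q mu t r * Lop F t r\<bar> \<le> C * K"
proof -
  obtain C1 where C1: "0 \<le> C1" "\<And>t r. 0 < r \<Longrightarrow> 1 \<le> t - r \<Longrightarrow> r < t - r \<Longrightarrow>
      omega2t p q mu t r / (2*r) * Lop_envelope_interior p q mu t r \<le> C1"
    using omega2t_Lop_envelope_interior[OF pr] by blast
  obtain C2 where C2: "0 \<le> C2" "\<And>t r. 0 < r \<Longrightarrow> 1 \<le> t - r \<Longrightarrow> t - r \<le> r \<Longrightarrow>
      omega2t p q mu t r / (2*r) * Lop_envelope_cone p q mu t r \<le> C2"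
    using omega2t_Lop_envelope_cone[OF pr] by blast
  show thesis
  proof (rule that)
    show "0 < C1 + C2 + 1" using C1 C2 by simp
    fix F :: "real \<Rightarrow> real \<Rightarrow> real" and K t r :: real
    assume K: "0 \<le> K" and r: "0 \<le> r"
      and bound: "\<And>s \<rho>. \<rho> \<noteq> 0 \<Longrightarrow> \<bar>F s \<rho>\<bar> \<le> K * cone_weight (omega1t p q mu) p s \<bar>\<rho>\<bar>"
      and cont: "\<And>s. 2 \<le> s \<Longrightarrow> continuous_on UNIV (F s)" and even: "\<And>s \<rho>. F s (-\<rho>) = F s \<rho>"
    define W where "W = omega2t p q mu t r / (2*r)"
    show "\<bar>omega2t p q mu t r * Lop F t r\<bar> \<le> (C1 + C2 + 1) * K"
    proof (cases "0 < r \<and> 1 \<le> t - r")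
      case False
      have "Lop F t r = 0"
      proof (cases "r = 0")
        case True
        then show ?thesis by (simp add: Lop_def)
      next
        case False
        then show ?thesis using Lop_eq_0_off_cone[OF bound] \<open>\<not> (0 < r \<and> 1 \<le> t - r)\<close> r by simp
      qed
      then show ?thesis using K C1 C2 by simp
    next
      case True
      have W0: "0 \<le> W"
        unfolding W_def by (intro divide_nonneg_pos less_imp_le[OF omega2t_pos]) (use True in auto)
      obtain E where E: "\<bar>Lop F t r\<bar> \<le> K * E / (2*r)" "W * E \<le> C1 + C2"
      proof (cases "r < t - r")
        case interior: True
        have "\<bar>Lop F t r\<bar> \<le> K * Lop_envelope_interior p q mu t r / (2*r)"
          by (rule abs_Lop_le_envelope_interior[OF pr K]) (use bound cont even True interior in auto)
        moreover have "W * Lop_envelope_interior p q mu t r \<le> C1"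
          unfolding W_def by (rule C1(2)) (use True interior in auto)
        ultimately show thesis using C2(1) by (intro that) auto
      next
        case cone: False
        have "\<bar>Lop F t r\<bar> \<le> K * Lop_envelope_cone p q mu t r / (2*r)"
          by (rule abs_Lop_le_envelope_cone[OF pr K]) (use bound cont even True cone in auto)
        moreover have "W * Lop_envelope_cone p q mu t r \<le> C2"
          unfolding W_def by (rule C2(2)) (use True cone in auto)
        ultimately show thesis using C1(1) by (intro that) auto
      qed
      have "\<bar>omega2t p q mu t r * Lop F t r\<bar> = 2 * r * W * \<bar>Lop F t r\<bar>"
        unfolding W_def using True less_imp_le[OF omega2t_pos[of r p q mu t]] by (simp add: abs_mult)
      also have "\<dots> \<le> 2 * r * W * (K * E / (2*r))" using E(1) W0 True by (intro mult_left_mono) auto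
      also have "\<dots> = K * (W * E)" using True by simp
      also have "\<dots> \<le> K * (C1 + C2)" using E(2) K by (intro mult_left_mono)
      also have "\<dots> \<le> (C1 + C2 + 1) * K" using K by (simp add: algebra_simps)
      finally show ?thesis .
    qed
  qed
qed

section \<open>The nonlinear terms on X_eps\<close>

lemma abs_powr_diff_le_cone_weight:
  fixes w wb \<omega> :: "real \<Rightarrow> real \<Rightarrow> real"
  assumes p: "1 \<le> p"
    and pos: "\<And>s x. 0 < x \<Longrightarrow> 0 < \<omega> s x"
    and bw: "\<forall>t r. 0 \<le> t \<and> 0 \<le> r \<longrightarrow> \<bar>\<omega> t r * w t r\<bar> \<le> A"
    and bwb: "\<forall>t r. 0 \<le> t \<and> 0 \<le> r \<longrightarrow> \<bar>\<omega> t r * wb t r\<bar> \<le> B"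
    and even: "\<And>t r. w t (-r) = w t r" "\<And>t r. wb t (-r) = wb t r"
    and supp: "\<And>t r. w t r \<noteq> 0 \<Longrightarrow> t - r \<ge> 1 \<and> t \<ge> 2" "\<And>t r. wb t r \<noteq> 0 \<Longrightarrow> t - r \<ge> 1 \<and> t \<ge> 2"
    and \<rho>: "\<rho> \<noteq> 0"
  shows "\<bar>\<bar>w s \<rho>\<bar> powr p - \<bar>wb s \<rho>\<bar> powr p\<bar> \<le>
     p * (Linf (\<lambda>t r. \<omega> t r * w t r) + Linf (\<lambda>t r. \<omega> t r * wb t r)) powr (p - 1)
       * Linf (\<lambda>t r. \<omega> t r * (w t r - wb t r)) * cone_weight \<omega> p s \<bar>\<rho>\<bar>"
proof -
  define x where "x = \<bar>\<rho>\<bar>"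
  have x0: "0 < x" using \<rho> unfolding x_def by simp
  have e: "w s \<rho> = w s x" "wb s \<rho> = wb s x"
    unfolding x_def using even by (cases "\<rho> < 0"; simp)+
  note bd = weighted_diff_bounded[OF bw bwb]
  show ?thesis
  proof (cases "2 \<le> s \<and> x \<le> s - 1")
    case True
    have s0: "0 \<le> s" using True by simp
    have w0: "0 < \<omega> s x" using pos[OF x0] .
    note sup = Linf_upper[OF _ s0 less_imp_le[OF x0]]
    have "\<bar>\<bar>w s x\<bar> powr p - \<bar>wb s x\<bar> powr p\<bar> \<le>
      p * (Linf (\<lambda>t r. \<omega> t r * w t r) + Linf (\<lambda>t r. \<omega> t r * wb t r)) powr (p - 1)
       * Linf (\<lambda>t r. \<omega> t r * (w t r - wb t r)) * \<omega> s x powr (-p)"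
      by (rule abs_powr_diff_le_weighted[OF p w0])
        (use sup[OF bw] sup[OF bwb] sup[OF bd] Linf_nonneg[OF bw] Linf_nonneg[OF bwb] w0
          in \<open>auto simp: abs_mult\<close>)
    then show ?thesis using True unfolding e x_def cone_weight_def by simp
  next
    case False
    have "w s x = 0" by (rule ccontr) (use False supp(1)[of s x] in auto)
    moreover have "wb s x = 0" by (rule ccontr) (use False supp(2)[of s x] in auto)
    moreover have "cone_weight \<omega> p s x = 0" unfolding cone_weight_def using False by auto
    ultimately show ?thesis using p unfolding e x_def by simp
  qed
qed

lemma continuous_on_abs_powr_slice:
  fixes w :: "real \<Rightarrow> real \<Rightarrow> real"
  assumes c: "continuous_on ({2..} \<times> UNIV) (\<lambda>(t, r). w t r)" and s: "2 \<le> s" and p: "0 < p"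
  shows "continuous_on UNIV (\<lambda>\<rho>. \<bar>w s \<rho>\<bar> powr p)"
proof -
  have "continuous_on UNIV ((\<lambda>(t, r). w t r) \<circ> (\<lambda>\<rho>::real. (s, \<rho>)))"
    by (rule continuous_on_compose) (auto intro!: continuous_intros continuous_on_subset[OF c] simp: s)
  then have "continuous_on UNIV (\<lambda>\<rho>. w s \<rho>)" by (simp add: o_def)
  then show ?thesis using p by (intro continuous_on_powr' continuous_intros) auto
qed

lemma XepsD:
  assumes "(w, v) \<in> Xeps p q mu C1 eps"
  shows "continuous_on ({2..} \<times> UNIV) (\<lambda>(t, r). w t r)"
    and "\<And>t r. w t (-r) = w t r" "\<And>t r. v t (-r) = v t r"
    and "\<And>t r. w t r \<noteq> 0 \<Longrightarrow> t - r \<ge> 1 \<and> t \<ge> 2" "\<And>t r. v t r \<noteq> 0 \<Longrightarrow> t - r \<ge> 1 \<and> t \<ge> 2"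
proof -
  have "continuous_on ({2..} \<times> UNIV) (\<lambda>(t, r). w t r) \<and>
     (\<forall>t r. w t (- r) = w t r \<and> v t (- r) = v t r) \<and>
     (\<forall>t r. w t r \<noteq> 0 \<longrightarrow> t - r \<ge> 1 \<and> t \<ge> 2) \<and>
     (\<forall>t r. v t r \<noteq> 0 \<longrightarrow> t - r \<ge> 1 \<and> t \<ge> 2)"
    using assms unfolding Xeps_def by simp
  then show "continuous_on ({2..} \<times> UNIV) (\<lambda>(t, r). w t r)"
    and "\<And>t r. w t (-r) = w t r" "\<And>t r. v t (-r) = v t r"
    and "\<And>t r. w t r \<noteq> 0 \<Longrightarrow> t - r \<ge> 1 \<and> t \<ge> 2" "\<And>t r. v t r \<noteq> 0 \<Longrightarrow> t - r \<ge> 1 \<and> t \<ge> 2"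
    by blast+
qed

lemma Xeps_omega1t_bounded:
  assumes "(w, v) \<in> Xeps p q mu C1 eps"
  obtains A where "\<forall>t r. 0 \<le> t \<and> 0 \<le> r \<longrightarrow> \<bar>omega1t p q mu t r * w t r\<bar> \<le> A"
proof -
  obtain A where A: "\<forall>t r. 0 \<le> t \<and> 0 \<le> r \<longrightarrow> \<bar>omega1 p q mu t r * w t r\<bar> \<le> A"
    using assms unfolding Xeps_def by blast
  have "\<bar>omega1t p q mu t r * w t r\<bar> \<le> \<bar>omega1 p q mu t r * w t r\<bar>" if "0 \<le> r" for t r
    using omega1t_le_omega1[OF that, of p q mu t] by (simp add: abs_mult mult_right_mono)
  with A show thesis by (intro that[of A]) (meson order.trans)
qed

lemma Xeps_omega2t_bounded:
  assumes "(w, v) \<in> Xeps p q mu C1 eps" and "2 < p"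
  obtains B where "\<forall>t r. 0 \<le> t \<and> 0 \<le> r \<longrightarrow> \<bar>omega2t p q mu t r * v t r\<bar> \<le> B"
proof -
  obtain B where B: "\<forall>t r. 0 \<le> t \<and> 0 \<le> r \<longrightarrow> \<bar>omega2 p q mu t r * v t r\<bar> \<le> B"
    using assms unfolding Xeps_def by blast
  have "\<bar>omega2t p q mu t r * v t r\<bar> \<le> \<bar>omega2 p q mu t r * v t r\<bar>" if "0 \<le> r" for t r
    using omega2t_le_omega2[OF that \<open>2 < p\<close>, of q mu t] by (simp add: abs_mult mult_right_mono)
  with B show thesis by (intro that[of B]) (meson order.trans)
qed

lemma Lop_powr_diff_bound:
  assumes pr: "exponent_conditions p q mu"
  shows "\<forall>\<^sub>F C in at_top. \<forall>w v wb vb.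
     (w, v) \<in> Xeps p q mu c eps \<longrightarrow> (wb, vb) \<in> Xeps p q mu c eps \<longrightarrow>
     (\<forall>t r. 0 \<le> t \<and> 0 \<le> r \<longrightarrow>
        \<bar>omega2t p q mu t r * Lop (\<lambda>s \<rho>. \<bar>w s \<rho>\<bar> powr p - \<bar>wb s \<rho>\<bar> powr p) t r\<bar>
        \<le> C * (Linf (\<lambda>t r. omega1t p q mu t r * w t r)
                + Linf (\<lambda>t r. omega1t p q mu t r * wb t r)) powr (p - 1)
              * Linf (\<lambda>t r. omega1t p q mu t r * (w t r - wb t r)))"
proof -
  have p: "1 \<le> p" using exponent_conditionsD[OF pr] by simp
  obtain C0 where "0 < C0" and est: "\<And>F K t r. 0 \<le> K \<Longrightarrow>
      (\<And>s \<rho>. \<rho> \<noteq> 0 \<Longrightarrow> \<bar>F s \<rho>\<bar> \<le> K * cone_weight (omega1t p q mu) p s \<bar>\<rho>\<bar>) \<Longrightarrow>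
      (\<And>s. 2 \<le> s \<Longrightarrow> continuous_on UNIV (F s)) \<Longrightarrow> (\<And>s \<rho>. F s (-\<rho>) = F s \<rho>) \<Longrightarrow>
      0 \<le> r \<Longrightarrow> \<bar>omega2t p q mu t r * Lop F t r\<bar> \<le> C0 * K"
    by (fact Lop_weighted_bound[OF pr])
  have "\<forall>\<^sub>F C in at_top. p * C0 \<le> C" by simp
  then show ?thesis
  proof (rule eventually_mono, intro allI impI)
    fix C t r :: real and w v wb vb :: "real \<Rightarrow> real \<Rightarrow> real"
    assume C: "p * C0 \<le> C" and X: "(w, v) \<in> Xeps p q mu c eps" and Xb: "(wb, vb) \<in> Xeps p q mu c eps"
      and tr: "0 \<le> t \<and> 0 \<le> r"
    obtain A where A: "\<forall>t r. 0 \<le> t \<and> 0 \<le> r \<longrightarrow> \<bar>omega1t p q mu t r * w t r\<bar> \<le> A"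
      using Xeps_omega1t_bounded[OF X] by blast
    obtain Ab where Ab: "\<forall>t r. 0 \<le> t \<and> 0 \<le> r \<longrightarrow> \<bar>omega1t p q mu t r * wb t r\<bar> \<le> Ab"
      using Xeps_omega1t_bounded[OF Xb] by blast
    note cont = XepsD(1)[OF X] XepsD(1)[OF Xb]
      and even = XepsD(2)[OF X] XepsD(2)[OF Xb]
      and supp = XepsD(4)[OF X] XepsD(4)[OF Xb]
    define M where "M = Linf (\<lambda>t r. omega1t p q mu t r * w t r) + Linf (\<lambda>t r. omega1t p q mu t r * wb t r)"
    define D where "D = Linf (\<lambda>t r. omega1t p q mu t r * (w t r - wb t r))"
    have D0: "0 \<le> D" unfolding D_def by (rule Linf_nonneg[OF weighted_diff_bounded[OF A Ab]])
    have "\<bar>omega2t p q mu t r * Lop (\<lambda>s \<rho>. \<bar>w s \<rho>\<bar> powr p - \<bar>wb s \<rho>\<bar> powr p) t r\<bar>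
        \<le> C0 * (p * M powr (p - 1) * D)"
    proof (rule est)
      show "0 \<le> p * M powr (p - 1) * D" using p D0 by simp
      show "\<bar>\<bar>w s \<rho>\<bar> powr p - \<bar>wb s \<rho>\<bar> powr p\<bar> \<le> p * M powr (p - 1) * D * cone_weight (omega1t p q mu) p s \<bar>\<rho>\<bar>"
        if "\<rho> \<noteq> 0" for s \<rho>
        unfolding M_def D_def by (rule abs_powr_diff_le_cone_weight[OF p omega1t_pos A Ab even supp that])
      show "continuous_on UNIV (\<lambda>\<rho>. \<bar>w s \<rho>\<bar> powr p - \<bar>wb s \<rho>\<bar> powr p)" if "2 \<le> s" for s
        using p by (intro continuous_on_diff continuous_on_abs_powr_slice cont that) auto
    qed (use even tr in auto)
    also have "\<dots> = (p * C0) * (M powr (p - 1) * D)" by (simp only: mult_ac)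
    also have "\<dots> \<le> C * M powr (p - 1) * D"
      unfolding mult.assoc[of C] using C D0 by (intro mult_right_mono) auto
    finally show "\<bar>omega2t p q mu t r * Lop (\<lambda>s \<rho>. \<bar>w s \<rho>\<bar> powr p - \<bar>wb s \<rho>\<bar> powr p) t r\<bar>
        \<le> C * (Linf (\<lambda>t r. omega1t p q mu t r * w t r)
                + Linf (\<lambda>t r. omega1t p q mu t r * wb t r)) powr (p - 1)
              * Linf (\<lambda>t r. omega1t p q mu t r * (w t r - wb t r))"
      unfolding M_def D_def .
  qed
qed

lemma Kplus_powr_diff_bound:
  assumes pr: "exponent_conditions p q mu"
  shows "\<forall>\<^sub>F C in at_top. \<forall>w v wb vb.
     (w, v) \<in> Xeps p q mu c eps \<longrightarrow> (wb, vb) \<in> Xeps p q mu c eps \<longrightarrow>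
     (\<forall>t r. 0 \<le> t \<and> 0 \<le> r \<longrightarrow>
        \<bar>omega1t p q mu t r / r * Kplus (\<lambda>s \<rho>. \<bar>v s \<rho>\<bar> powr q - \<bar>vb s \<rho>\<bar> powr q) t r\<bar>
        \<le> C * (Linf (\<lambda>t r. omega2t p q mu t r * v t r)
                + Linf (\<lambda>t r. omega2t p q mu t r * vb t r)) powr (q - 1)
              * Linf (\<lambda>t r. omega2t p q mu t r * (v t r - vb t r)))"
proof -
  note f = exponent_conditionsD[OF pr]
  have q: "1 \<le> q" using f by simp
  obtain C0 where "0 < C0" and est: "\<And>F K t r. 0 \<le> K \<Longrightarrow>
      (\<And>s \<rho>. \<rho> \<noteq> 0 \<Longrightarrow> \<bar>F s \<rho>\<bar> \<le> K * cone_weight (omega2t p q mu) q s \<bar>\<rho>\<bar>) \<Longrightarrow>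
      0 \<le> r \<Longrightarrow> \<bar>omega1t p q mu t r / r * Kplus F t r\<bar> \<le> C0 * K"
    by (fact Kplus_weighted_bound[OF pr])
  have "\<forall>\<^sub>F C in at_top. q * C0 \<le> C" by simp
  then show ?thesis
  proof (rule eventually_mono, intro allI impI)
    fix C t r :: real and w v wb vb :: "real \<Rightarrow> real \<Rightarrow> real"
    assume C: "q * C0 \<le> C" and X: "(w, v) \<in> Xeps p q mu c eps" and Xb: "(wb, vb) \<in> Xeps p q mu c eps"
      and tr: "0 \<le> t \<and> 0 \<le> r"
    obtain B where B: "\<forall>t r. 0 \<le> t \<and> 0 \<le> r \<longrightarrow> \<bar>omega2t p q mu t r * v t r\<bar> \<le> B"
      using Xeps_omega2t_bounded[OF X] f by blast
    obtain Bb where Bb: "\<forall>t r. 0 \<le> t \<and> 0 \<le> r \<longrightarrow> \<bar>omega2t p q mu t r * vb t r\<bar> \<le> Bb"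
      using Xeps_omega2t_bounded[OF Xb] f by blast
    note even = XepsD(3)[OF X] XepsD(3)[OF Xb]
      and supp = XepsD(5)[OF X] XepsD(5)[OF Xb]
    define M where "M = Linf (\<lambda>t r. omega2t p q mu t r * v t r) + Linf (\<lambda>t r. omega2t p q mu t r * vb t r)"
    define D where "D = Linf (\<lambda>t r. omega2t p q mu t r * (v t r - vb t r))"
    have D0: "0 \<le> D" unfolding D_def by (rule Linf_nonneg[OF weighted_diff_bounded[OF B Bb]])
    have "\<bar>omega1t p q mu t r / r * Kplus (\<lambda>s \<rho>. \<bar>v s \<rho>\<bar> powr q - \<bar>vb s \<rho>\<bar> powr q) t r\<bar>
        \<le> C0 * (q * M powr (q - 1) * D)"
    proof (rule est)
      show "0 \<le> q * M powr (q - 1) * D" using q D0 by simp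
      show "\<bar>\<bar>v s \<rho>\<bar> powr q - \<bar>vb s \<rho>\<bar> powr q\<bar> \<le> q * M powr (q - 1) * D * cone_weight (omega2t p q mu) q s \<bar>\<rho>\<bar>"
        if "\<rho> \<noteq> 0" for s \<rho>
        unfolding M_def D_def by (rule abs_powr_diff_le_cone_weight[OF q omega2t_pos B Bb even supp that])
    qed (use tr in auto)
    also have "\<dots> = (q * C0) * (M powr (q - 1) * D)" by (simp only: mult_ac)
    also have "\<dots> \<le> C * M powr (q - 1) * D"
      unfolding mult.assoc[of C] using C D0 by (intro mult_right_mono) auto
    finally show "\<bar>omega1t p q mu t r / r * Kplus (\<lambda>s \<rho>. \<bar>v s \<rho>\<bar> powr q - \<bar>vb s \<rho>\<bar> powr q) t r\<bar>
        \<le> C * (Linf (\<lambda>t r. omega2t p q mu t r * v t r)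
                + Linf (\<lambda>t r. omega2t p q mu t r * vb t r)) powr (q - 1)
              * Linf (\<lambda>t r. omega2t p q mu t r * (v t r - vb t r))"
      unfolding M_def D_def .
  qed
qed

theorem lemma4p2:
  fixes p q mu eps C1 :: real
  assumes "p * (q - 1) > 2 + 1 / (p * q)"
    and "1 < q" and "q < 2" and "2 < p" and "p < 3"
    and "mu < 1"
    and "- mu - p * q + 2 * p \<le> p - 3 - mu / (p * q)"
    and "eps > 0" and "C1 > 0"
  shows "\<exists>C > 0. \<forall>w v wb vb.
     (w, v) \<in> Xeps p q mu C1 eps \<longrightarrow> (wb, vb) \<in> Xeps p q mu C1 eps \<longrightarrow>
     (\<forall>t r. 0 \<le> t \<and> 0 \<le> r \<longrightarrow>
        \<bar>omega2t p q mu t r * Lop (\<lambda>s \<rho>. \<bar>w s \<rho>\<bar> powr p - \<bar>wb s \<rho>\<bar> powr p) t r\<bar>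
        \<le> C * (Linf (\<lambda>t r. omega1t p q mu t r * w t r)
                + Linf (\<lambda>t r. omega1t p q mu t r * wb t r)) powr (p - 1)
              * Linf (\<lambda>t r. omega1t p q mu t r * (w t r - wb t r))) \<and>
     (\<forall>t r. 0 \<le> t \<and> 0 \<le> r \<longrightarrow>
        \<bar>omega1t p q mu t r / r * Kplus (\<lambda>s \<rho>. \<bar>v s \<rho>\<bar> powr q - \<bar>vb s \<rho>\<bar> powr q) t r\<bar>
        \<le> C * (Linf (\<lambda>t r. omega2t p q mu t r * v t r)
                + Linf (\<lambda>t r. omega2t p q mu t r * vb t r)) powr (q - 1)
              * Linf (\<lambda>t r. omega2t p q mu t r * (v t r - vb t r)))"
proof -
  have pr: "exponent_conditions p q mu" using assms unfolding exponent_conditions_def by auto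
  note bounds = Lop_powr_diff_bound[OF pr, where c = C1 and eps = eps]
    Kplus_powr_diff_bound[OF pr, where c = C1 and eps = eps]
  show ?thesis
    using eventually_happens'[OF trivial_limit_at_top_linorder
        eventually_conj[OF eventually_gt_at_top[of 0] eventually_conj[OF bounds]]]
    by (elim exE conjE) (intro exI conjI allI impI; blast)
qed

end
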